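(* Let $T=T_\lambda(r,m)$ act linearly and inner faithfully on $\Bbbk\overline{Q}$ ($n\ge 3$) so that $g$ acts by a reflection: there are an integer $d$ with $0<d\le n-1$ and scalars $\mu_i,\mu_i^*\in\Bbbk^\times$ with $$g\cdot e_i=e_{n-(d+i)},\qquad g\cdot a_i=\mu_i a^*_{n-(d+i+1)},\qquad g\cdot a_i^*=\mu_i^*a_{n-(d+i+1)}\quad(0\le i\le n-1),$$ and suppose this action descends to an action on $\Pi_Q$. Then $r=2$ (so $\lambda=-1$), and: (1) $\mu_i^*=\mu_i^{-1}$ for all $i$, i.e. $g\cdot a_i=\mu_i a^*_{n-(d+i+1)}$ and $g\cdot a_i^*=\mu_i^{-1}a_{n-(d+i+1)}$, and $(\mu_i\mu_{n-(d+i+1)}^{-1})^{m/2}=1$ for all $i$. (2) $x\cdot e_i=\gamma_i(e_i+e_{n-(d+i)})$, where the $\gamma_i$ satisfy $\gamma_i=-\gamma_{n-(d+i)}$ (so $\gamma_j=0$ whenever $g\cdot j=j$) and $\gamma_{i+1}^2=\mu_i\mu_{n-(d+i+1)}^{-1}\gamma_i^2$ for every $i$ such that neither $i$ nor $i+1$ is a vertex fixed by $g$. (3) For all $i$, $$x\cdot a_i=\gamma_{i+1}a_i+\gamma_i\mu_i a^*_{n-(d+i+1)}+\sigma(a_i),\qquad x\cdot a_i^*=\gamma_i a_i^*+\gamma_{i+1}\mu_i^{-1}a_{n-(d+i+1)}+\sigma(a_i^* ),$$ where the quiver-Taft map $\sigma$ satisfies: - if $j$ is a vertex with $g\cdot j=j$,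 then there is a scalar $c_j$ with $c_j=\pm\gamma_{j-1}\sqrt{\mu_j\mu_{j-1}}$ (i.e. $c_j^2=\mu_j\mu_{j-1}\gamma_{j-1}^2$) such that $\sigma(a_{j-1})=\mu_j^{-1}c_j a_{j-1}$, $\sigma(a_j)=c_j a_{j-1}^*$, $\sigma(a_{j-1}^* )=-(\mu_j\mu_{j-1})^{-1}c_j a_j$, $\sigma(a_j^* )=-\mu_j^{-1}c_j a_j^*$; - if $k$ is a vertex with $g\cdot k=k+1$ and $g\cdot(k+1)=k$, then there is a scalar $c_k$ with $\sigma(a_k)=c_k e_k$ and $\sigma(a_k^* )=-\mu_k^{-1}c_k e_{k+1}$; moreover, if $\gamma_i=0$ for all $i$, then $c_k\ne 0$ for some such $k$; - if $i$ is neither $j-1$ nor $j$ for a vertex $j$ fixed by $g$, nor a vertex $k$ with $g\cdot k=k+1$, then $\sigma(a_i)=\sigma(a_i^* )=0$.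
   Context: Let $\Bbbk$ be a field, $r>1$ and $m$ positive integers with $r\mid m$, and $\lambda\in\Bbbk$ a primitive $r$-th root of unity, with $r$ coprime to the characteristic of $\Bbbk$. The generalized Taft algebra $T=T_\lambda(r,m)$ is the Hopf algebra generated by $g,x$ with relations $gx=\lambda xg$, $g^m=1$, $x^r=0$, coproduct $\Delta(g)=g\otimes g$, $\Delta(x)=1\otimes x+x\otimes g$, counit $\varepsilon(g)=1,\varepsilon(x)=0$, antipode $S(g)=g^{-1}$, $S(x)=-xg^{-1}$. An action of $T$ on an algebra $A$ is a $T$-module algebra structure ($h\cdot(ab)=\sum (h_{(1)}\cdot a)(h_{(2)}\cdot b)$, $h\cdot 1=\varepsilon(h)1$); so $g$ acts by an algebra automorphism and $x\cdot(ab)=a(x\cdot b)+(x\cdot a)(g\cdot b)$. It is inner faithful if no nonzero Hopf ideal $I$ of $T$ satisfies $I\cdot A=0$. Fix $n\ge3$; vertex indices are taken modulo $n$. $\overline{Q}$ is the quiver with vertices $0,\dots,n-1$ and arrows $a_i:i\to i+1$, $a_i^*:i+1\to i$. In the path algebra $\Bbbk\overline{Q}$, $e_i$ is the trivial path at $i$, $s(a),t(a)$ are source and target, and $pq$ is the concatenation ($p$ then $q$) if $t(p)=s(q)$, else $0$. The preprojective algebra is $\Pi_Q=\Bbbk\overline{Q}/(\Omega)$ where $(\Omega)$ is the ideal generated by $a_i^*a_i-a_{i+1}a_{i+1}^*$, $0\le i\le n-1$. The action descends to $\Pi_Q$ if $(\Omega)$ is stable under $g$ and $x$, so that an action on $\Pi_Q$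 is induced. A linear action of $T$ on $\Bbbk\overline{Q}$: $g$ acts by a path-length-preserving automorphism (permuting vertices, $g\cdot e_i=e_{g\cdot i}$) and $x$ maps the span of vertices to itself and arrows into the span of vertices and arrows. For such an action there are scalars $\gamma_i$ with $x\cdot e_i=\gamma_i e_i-\gamma_i\lambda^{-1}e_{g\cdot i}$. The quiver-Taft map $\sigma$ is the linear map on the span of vertices and arrows with $\sigma(e_i)=0$ and $\sigma(a)=x\cdot a-\gamma_{t(a)}a+\gamma_{s(a)}\lambda^{-1}(g\cdot a)$ for each arrow $a$. *)

theory Defs
  imports Main
begin

section \<open>The doubled cyclic quiver and its path algebra\<close>

text \<open>Vertices are 0..n-1 (indices mod n). Arrows: Arr i = a_i : i -> i+1,
  Star i = a_i^* : i+1 -> i.\<close>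

datatype arr = Arr nat | Star nat

definition suc_v :: "nat \<Rightarrow> nat \<Rightarrow> nat" where
  "suc_v n i = (i + 1) mod n"

definition pre_v :: "nat \<Rightarrow> nat \<Rightarrow> nat" where
  "pre_v n i = (i + n - 1) mod n"

fun arr_idx :: "arr \<Rightarrow> nat" where
  "arr_idx (Arr i) = i" | "arr_idx (Star i) = i"

fun src :: "nat \<Rightarrow> arr \<Rightarrow> nat" where
  "src n (Arr i) = i" | "src n (Star i) = suc_v n i"

fun tgt :: "nat \<Rightarrow> arr \<Rightarrow> nat" where
  "tgt n (Arr i) = suc_v n i" | "tgt n (Star i) = i"

text \<open>A path is a start vertex together with a (possibly empty) list of composable
  arrows; (i, []) is the trivial path e_i.\<close>

type_synonym path = "nat \<times> arr list"

fun path_ok :: "nat \<Rightarrow> path \<Rightarrow> bool" where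
  "path_ok n (v, []) = (v < n)"
| "path_ok n (v, a # as) = (arr_idx a < n \<and> v < n \<and> src n a = v \<and> path_ok n (tgt n a, as))"

fun ptgt :: "nat \<Rightarrow> path \<Rightarrow> nat" where
  "ptgt n (v, []) = v"
| "ptgt n (v, a # as) = ptgt n (tgt n a, as)"

definition pcat :: "nat \<Rightarrow> path \<Rightarrow> path \<Rightarrow> path option" where
  "pcat n p q = (if ptgt n p = fst q then Some (fst p, snd p @ snd q) else None)"

type_synonym 'k pa = "path \<Rightarrow> 'k"

definition PA :: "nat \<Rightarrow> ('k::field) pa set" where
  "PA n = {f. finite {p. f p \<noteq> 0} \<and> (\<forall>p. f p \<noteq> 0 \<longrightarrow> path_ok n p)}"

definition pzero :: "('k::field) pa" where
  "pzero = (\<lambda>_. 0)"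

definition padd :: "('k::field) pa \<Rightarrow> 'k pa \<Rightarrow> 'k pa" where
  "padd f h = (\<lambda>p. f p + h p)"

definition psc :: "'k::field \<Rightarrow> 'k pa \<Rightarrow> 'k pa" where
  "psc c f = (\<lambda>p. c * f p)"

definition psum_list :: "('k::field) pa list \<Rightarrow> 'k pa" where
  "psum_list fs = foldr padd fs pzero"

definition pmul :: "nat \<Rightarrow> ('k::field) pa \<Rightarrow> 'k pa \<Rightarrow> 'k pa" where
  "pmul n f h = (\<lambda>w. \<Sum>(p, q) \<in> {(p, q). f p \<noteq> 0 \<and> h q \<noteq> 0 \<and> pcat n p q = Some w}. f p * h q)"

definition bas :: "path \<Rightarrow> ('k::field) pa" where
  "bas p = (\<lambda>q. if q = p then 1 else 0)"

definition pone :: "nat \<Rightarrow> ('k::field) pa" where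
  "pone n = (\<lambda>p. if (\<exists>i<n. p = (i, [])) then 1 else 0)"

definition ev :: "nat \<Rightarrow> ('k::field) pa" where
  "ev i = bas (i, [])"

definition arrv :: "nat \<Rightarrow> arr \<Rightarrow> ('k::field) pa" where
  "arrv n a = bas (src n a, [a])"

abbreviation av :: "nat \<Rightarrow> nat \<Rightarrow> ('k::field) pa" where
  "av n i \<equiv> arrv n (Arr i)"

abbreviation asv :: "nat \<Rightarrow> nat \<Rightarrow> ('k::field) pa" where
  "asv n i \<equiv> arrv n (Star i)"

definition vert_span :: "nat \<Rightarrow> ('k::field) pa set" where
  "vert_span n = {f \<in> PA n. \<forall>p. f p \<noteq> 0 \<longrightarrow> snd p = []}"

definition vert_arr_span :: "nat \<Rightarrow> ('k::field) pa set" where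
  "vert_arr_span n = {f \<in> PA n. \<forall>p. f p \<noteq> 0 \<longrightarrow> length (snd p) \<le> 1}"

definition prel :: "nat \<Rightarrow> nat \<Rightarrow> ('k::field) pa" where
  "prel n i = padd (pmul n (asv n i) (av n i))
                   (psc (-1) (pmul n (av n (suc_v n i)) (asv n (suc_v n i))))"

definition omega_ideal :: "nat \<Rightarrow> ('k::field) pa set" where
  "omega_ideal n = {F. \<exists>l :: ('k pa \<times> nat \<times> 'k pa) list.
       (\<forall>(u, i, v) \<in> set l. u \<in> PA n \<and> v \<in> PA n \<and> i < n) \<and>
       F = psum_list (map (\<lambda>(u, i, v). pmul n (pmul n u (prel n i)) v) l)}"

section \<open>The generalized Taft algebra T_lambda(r, m)\<close>

text \<open>Elements of T are functions on basis indices (a, b) standing for g^a x^b,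
  a < m, b < r.\<close>

type_synonym 'k taft = "nat \<times> nat \<Rightarrow> 'k"
type_synonym 'k taft2 = "(nat \<times> nat) \<times> (nat \<times> nat) \<Rightarrow> 'k"

definition Tidx :: "nat \<Rightarrow> nat \<Rightarrow> (nat \<times> nat) set" where
  "Tidx m r = {..<m} \<times> {..<r}"

definition Tcar :: "nat \<Rightarrow> nat \<Rightarrow> ('k::field) taft set" where
  "Tcar m r = {h. \<forall>z. h z \<noteq> 0 \<longrightarrow> z \<in> Tidx m r}"

definition tdelta :: "nat \<times> nat \<Rightarrow> ('k::field) taft" where
  "tdelta z = (\<lambda>w. if w = z then 1 else 0)"

text \<open>Structure constants: g^a1 x^b1 g^a2 x^b2 = lambda^(-b1 a2) g^(a1+a2) x^(b1+b2),
  using g x = lambda x g, g^m = 1, x^r = 0.\<close>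
definition tcoef :: "'k::field \<Rightarrow> nat \<Rightarrow> nat \<Rightarrow> nat \<times> nat \<Rightarrow> nat \<times> nat \<Rightarrow> nat \<times> nat \<Rightarrow> 'k" where
  "tcoef lam m r z1 z2 z =
     (if (fst z1 + fst z2) mod m = fst z \<and> snd z1 + snd z2 = snd z \<and> snd z < r
      then inverse lam ^ (snd z1 * fst z2) else 0)"

definition tmul :: "'k::field \<Rightarrow> nat \<Rightarrow> nat \<Rightarrow> 'k taft \<Rightarrow> 'k taft \<Rightarrow> 'k taft" where
  "tmul lam m r h1 h2 = (\<lambda>z. \<Sum>z1 \<in> Tidx m r. \<Sum>z2 \<in> Tidx m r. h1 z1 * h2 z2 * tcoef lam m r z1 z2 z)"

definition tone :: "('k::field) taft" where
  "tone = tdelta (0, 0)"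

definition tpow :: "'k::field \<Rightarrow> nat \<Rightarrow> nat \<Rightarrow> 'k taft \<Rightarrow> nat \<Rightarrow> 'k taft" where
  "tpow lam m r h k = ((tmul lam m r h) ^^ k) tone"

definition ttensor :: "('k::field) taft \<Rightarrow> 'k taft \<Rightarrow> 'k taft2" where
  "ttensor u v = (\<lambda>(p, q). u p * v q)"

definition ttmul :: "'k::field \<Rightarrow> nat \<Rightarrow> nat \<Rightarrow> 'k taft2 \<Rightarrow> 'k taft2 \<Rightarrow> 'k taft2" where
  "ttmul lam m r F H = (\<lambda>(p, q). \<Sum>p1 \<in> Tidx m r. \<Sum>q1 \<in> Tidx m r. \<Sum>p2 \<in> Tidx m r. \<Sum>q2 \<in> Tidx m r.
       F (p1, q1) * H (p2, q2) * tcoef lam m r p1 p2 p * tcoef lam m r q1 q2 q)"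

definition ttpow :: "'k::field \<Rightarrow> nat \<Rightarrow> nat \<Rightarrow> 'k taft2 \<Rightarrow> nat \<Rightarrow> 'k taft2" where
  "ttpow lam m r F k = ((ttmul lam m r F) ^^ k) (ttensor tone tone)"

text \<open>Coproduct: Delta(g) = g (x) g, Delta(x) = 1 (x) x + x (x) g, extended multiplicatively.\<close>
definition tDelta :: "'k::field \<Rightarrow> nat \<Rightarrow> nat \<Rightarrow> 'k taft \<Rightarrow> 'k taft2" where
  "tDelta lam m r h = (\<lambda>w. \<Sum>z \<in> Tidx m r. h z *
      ttmul lam m r (ttpow lam m r (ttensor (tdelta (1, 0)) (tdelta (1, 0))) (fst z))
                    (ttpow lam m r (\<lambda>w'. ttensor (tdelta (0, 0)) (tdelta (0, 1)) w'
                                       + ttensor (tdelta (0, 1)) (tdelta (1, 0)) w') (snd z)) w)"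

definition teps :: "nat \<Rightarrow> nat \<Rightarrow> ('k::field) taft \<Rightarrow> 'k" where
  "teps m r h = (\<Sum>a<m. h (a, 0))"

text \<open>Antipode: S(g) = g^(-1) = g^(m-1), S(x) = - x g^(-1), antimultiplicative:
  S(g^a x^b) = S(x)^b S(g)^a.\<close>
definition tS :: "'k::field \<Rightarrow> nat \<Rightarrow> nat \<Rightarrow> 'k taft \<Rightarrow> 'k taft" where
  "tS lam m r h = (\<lambda>w. \<Sum>z \<in> Tidx m r. h z *
      tmul lam m r (tpow lam m r (\<lambda>w'. - tmul lam m r (tdelta (0, 1)) (tdelta (m - 1, 0)) w') (snd z))
                   (tpow lam m r (tdelta (m - 1, 0)) (fst z)) w)"

definition lspan :: "('a \<Rightarrow> 'k::field) set \<Rightarrow> ('a \<Rightarrow> 'k) set" where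
  "lspan S = {F. \<exists>l :: ('k \<times> ('a \<Rightarrow> 'k)) list. set (map snd l) \<subseteq> S \<and>
                 F = (\<lambda>z. sum_list (map (\<lambda>(c, u). c * u z) l))}"

definition hopf_ideal :: "'k::field \<Rightarrow> nat \<Rightarrow> nat \<Rightarrow> 'k taft set \<Rightarrow> bool" where
  "hopf_ideal lam m r I \<longleftrightarrow>
     I \<subseteq> Tcar m r \<and> (\<lambda>_. 0) \<in> I \<and>
     (\<forall>h\<in>I. \<forall>h'\<in>I. (\<lambda>z. h z + h' z) \<in> I) \<and>
     (\<forall>c. \<forall>h\<in>I. (\<lambda>z. c * h z) \<in> I) \<and>
     (\<forall>h\<in>I. \<forall>t\<in>Tcar m r. tmul lam m r h t \<in> I \<and> tmul lam m r t h \<in> I) \<and>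
     (\<forall>h\<in>I. teps m r h = 0) \<and>
     (\<forall>h\<in>I. tDelta lam m r h \<in>
        lspan ({ttensor u v | u v. u \<in> I \<and> v \<in> Tcar m r} \<union>
               {ttensor u v | u v. u \<in> Tcar m r \<and> v \<in> I})) \<and>
     (\<forall>h\<in>I. tS lam m r h \<in> I)"

section \<open>Actions of T on the path algebra\<close>

text \<open>A T-action is given by the operators G (action of g) and X (action of x);
  a general element h = sum h(a,b) g^a x^b acts by sum h(a,b) G^a X^b.\<close>
definition tact :: "nat \<Rightarrow> nat \<Rightarrow> ('k::field pa \<Rightarrow> 'k pa) \<Rightarrow> ('k pa \<Rightarrow> 'k pa) \<Rightarrow> 'k taft \<Rightarrow> 'k pa \<Rightarrow> 'k pa" where
  "tact m r G X h f = (\<lambda>p. \<Sum>z \<in> Tidx m r. h z * (G ^^ fst z) ((X ^^ snd z) f) p)"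

text \<open>T-module algebra structure on k Q-bar: G, X linear on the path algebra,
  satisfying the defining relations of T (g x = lambda x g, g^m = 1, x^r = 0),
  and h.(ab) = h_(1).a h_(2).b, h.1 = eps(h) 1 for the generators g, x.\<close>
definition taft_module_algebra :: "nat \<Rightarrow> 'k::field \<Rightarrow> nat \<Rightarrow> nat \<Rightarrow> ('k pa \<Rightarrow> 'k pa) \<Rightarrow> ('k pa \<Rightarrow> 'k pa) \<Rightarrow> bool" where
  "taft_module_algebra n lam r m G X \<longleftrightarrow>
     (\<forall>f\<in>PA n. G f \<in> PA n \<and> X f \<in> PA n) \<and>
     (\<forall>f\<in>PA n. \<forall>h\<in>PA n. G (padd f h) = padd (G f) (G h) \<and> X (padd f h) = padd (X f) (X h)) \<and>
     (\<forall>c. \<forall>f\<in>PA n. G (psc c f) = psc c (G f) \<and> X (psc c f) = psc c (X f)) \<and>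
     (\<forall>f\<in>PA n. G (X f) = psc lam (X (G f))) \<and>
     (\<forall>f\<in>PA n. (G ^^ m) f = f) \<and>
     (\<forall>f\<in>PA n. (X ^^ r) f = pzero) \<and>
     (\<forall>f\<in>PA n. \<forall>h\<in>PA n. G (pmul n f h) = pmul n (G f) (G h)) \<and>
     (\<forall>f\<in>PA n. \<forall>h\<in>PA n. X (pmul n f h) = padd (pmul n f (X h)) (pmul n (X f) (G h))) \<and>
     G (pone n) = pone n \<and> X (pone n) = pzero"

definition inner_faithful :: "nat \<Rightarrow> 'k::field \<Rightarrow> nat \<Rightarrow> nat \<Rightarrow> ('k pa \<Rightarrow> 'k pa) \<Rightarrow> ('k pa \<Rightarrow> 'k pa) \<Rightarrow> bool" where
  "inner_faithful n lam r m G X \<longleftrightarrow>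
     (\<forall>I. hopf_ideal lam m r I \<and> (\<exists>h\<in>I. h \<noteq> (\<lambda>_. 0)) \<longrightarrow>
          \<not> (\<forall>h\<in>I. \<forall>f\<in>PA n. tact m r G X h f = pzero))"

definition linear_action :: "nat \<Rightarrow> ('k::field pa \<Rightarrow> 'k pa) \<Rightarrow> ('k pa \<Rightarrow> 'k pa) \<Rightarrow> bool" where
  "linear_action n G X \<longleftrightarrow>
     (\<exists>\<pi>. bij_betw \<pi> {..<n} {..<n} \<and> (\<forall>i<n. G (ev i) = ev (\<pi> i))) \<and>
     (\<forall>f\<in>PA n. \<forall>l. (\<forall>p. f p \<noteq> 0 \<longrightarrow> length (snd p) = l) \<longrightarrow>
                   (\<forall>p. G f p \<noteq> 0 \<longrightarrow> length (snd p) = l)) \<and>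
     (\<forall>f\<in>vert_span n. X f \<in> vert_span n) \<and>
     (\<forall>i<n. X (av n i) \<in> vert_arr_span n \<and> X (asv n i) \<in> vert_arr_span n)"

definition descends :: "nat \<Rightarrow> ('k::field pa \<Rightarrow> 'k pa) \<Rightarrow> ('k pa \<Rightarrow> 'k pa) \<Rightarrow> bool" where
  "descends n G X \<longleftrightarrow> (\<forall>F\<in>omega_ideal n. G F \<in> omega_ideal n \<and> X F \<in> omega_ideal n)"

definition grefl :: "nat \<Rightarrow> nat \<Rightarrow> nat \<Rightarrow> nat" where
  "grefl n d i = nat ((int n - int d - int i) mod int n)"

definition qt_sigma :: "nat \<Rightarrow> 'k::field \<Rightarrow> ('k pa \<Rightarrow> 'k pa) \<Rightarrow> ('k pa \<Rightarrow> 'k pa) \<Rightarrow> (nat \<Rightarrow> 'k) \<Rightarrow> arr \<Rightarrow> 'k pa" where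
  "qt_sigma n lam G X \<gamma> a =
     (\<lambda>p. X (arrv n a) p - \<gamma> (tgt n a) * arrv n a p + \<gamma> (src n a) * inverse lam * G (arrv n a) p)"

end

theory Submission
  imports Defs
begin

text \<open>
  Write x e_i, x a_i and x a*_i through the scalars gam i (the e_i-coefficient of x e_i) and
  the quiver-Taft map sigma. The twisted Leibniz rule applied to e_i = e_i e_i and to
  a = e_s a = a e_t confines x e_i to the span of e_i and e_(g i), and sigma(a) to at most three
  paths, so sigma is described by six families of scalars. Comparing g sigma(a) with
  sigma(g a), via g x = lam x g, and applying x to the preprojective relations, which the action
  preserves, gives linear equations between these scalars; applying g to the relations shows
  that mu_i mu*_i does not depend on i. If lam^2 \<noteq> 1, or if mu_i mu*_i \<noteq> 1 (here x^2 = 0 on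
  arrows is used as well), the equations force x to vanish on all generators, hence on the
  whole path algebra, so the Hopf ideal generated by x acts by zero, contradicting inner
  faithfulness. Thus lam = -1, r = 2 and mu*_i = 1/mu_i; the remaining identities are the
  surviving equations, and g^m = 1 applied to a_i gives the power condition.
\<close>

section \<open>Vertex arithmetic on the cyclic quiver\<close>

lemma int_grefl: "0 < n \<Longrightarrow> int (grefl n d i) = (int n - int d - int i) mod int n"
  by (simp add: grefl_def)

lemma int_suc_v: "0 < n \<Longrightarrow> int (suc_v n i) = (int i + 1) mod int n"
  by (simp add: suc_v_def zmod_int add.commute)

lemma int_pre_v: "0 < n \<Longrightarrow> int (pre_v n i) = (int i - 1) mod int n"
proof -
  assume "0 < n"
  then have "int (pre_v n i) = (int i - 1 + int n) mod int n"
    by (simp add: pre_v_def zmod_int of_nat_diff algebra_simps)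
  then show ?thesis by simp
qed

lemma grefl_less: "0 < n \<Longrightarrow> grefl n d i < n"
  by (simp add: grefl_def nat_less_iff)

lemma suc_v_less: "0 < n \<Longrightarrow> suc_v n i < n"
  by (simp add: suc_v_def)

lemma pre_v_less: "0 < n \<Longrightarrow> pre_v n i < n"
  by (simp add: pre_v_def)

lemma grefl_grefl: "i < n \<Longrightarrow> grefl n d (grefl n d i) = i"
proof -
  assume i: "i < n"
  have "int (grefl n d (grefl n d i)) = (int n - int d - (int n - int d - int i)) mod int n"
    using i by (simp add: int_grefl mod_diff_right_eq)
  also have "\<dots> = int i" using i by simp
  finally show ?thesis by simp
qed

lemma suc_v_pre_v: "i < n \<Longrightarrow> suc_v n (pre_v n i) = i"
proof -
  assume i: "i < n"
  have "int (suc_v n (pre_v n i)) = ((int i - 1) mod int n + 1) mod int n"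
    using i by (simp add: int_suc_v int_pre_v)
  also have "\<dots> = int i" using i by (simp add: mod_add_left_eq)
  finally show ?thesis by simp
qed

lemma pre_v_suc_v: "i < n \<Longrightarrow> pre_v n (suc_v n i) = i"
proof -
  assume i: "i < n"
  have "int (pre_v n (suc_v n i)) = ((int i + 1) mod int n - 1) mod int n"
    using i by (simp add: int_suc_v int_pre_v)
  also have "\<dots> = int i" using i by (simp add: mod_diff_left_eq)
  finally show ?thesis by simp
qed

lemma grefl_suc_v: "i < n \<Longrightarrow> grefl n d (suc_v n i) = pre_v n (grefl n d i)"
proof -
  assume i: "i < n"
  have "int (grefl n d (suc_v n i)) = (int n - int d - (int i + 1)) mod int n"
    using i by (simp add: int_suc_v int_grefl mod_diff_right_eq)
  also have "\<dots> = (int n - int d - int i - 1) mod int n"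
    by (rule arg_cong[where f="\<lambda>x. x mod int n"]) simp
  also have "\<dots> = ((int n - int d - int i) mod int n - 1) mod int n"
    by (simp add: mod_diff_left_eq)
  also have "\<dots> = int (pre_v n (grefl n d i))"
    using i by (simp add: int_pre_v int_grefl)
  finally show ?thesis by simp
qed

lemma grefl_pre_v: "i < n \<Longrightarrow> grefl n d (pre_v n i) = suc_v n (grefl n d i)"
  by (metis grefl_grefl grefl_less grefl_suc_v pre_v_less suc_v_pre_v gr_implies_not0 not_gr0)

lemma grefl_Suc: "i < n \<Longrightarrow> grefl n d (Suc i) = grefl n d (suc_v n i)"
proof -
  assume i: "i < n"
  have "int (grefl n d (Suc i)) = (int n - int d - (int i + 1)) mod int n"
    using i by (simp add: int_grefl add.commute)
  also have "\<dots> = (int n - int d - (int i + 1) mod int n) mod int n"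
    by (rule mod_diff_right_eq[symmetric])
  also have "\<dots> = int (grefl n d (suc_v n i))"
    using i by (simp add: int_grefl int_suc_v)
  finally show ?thesis by simp
qed

lemma grefl_suc_v_eq_iff: "i < n \<Longrightarrow> grefl n d (suc_v n i) = i \<longleftrightarrow> grefl n d i = suc_v n i"
  by (metis grefl_grefl suc_v_less gr_implies_not0 not_gr0)

lemma suc_v_neq: "3 \<le> n \<Longrightarrow> i < n \<Longrightarrow> suc_v n i \<noteq> i"
proof (cases "i + 1 < n")
  case False
  moreover assume "3 \<le> n" "i < n"
  ultimately have "i + 1 = n" "0 < i" by linarith+
  then show ?thesis by (simp add: suc_v_def)
qed (simp add: suc_v_def)

lemma pre_v_neq: "3 \<le> n \<Longrightarrow> i < n \<Longrightarrow> pre_v n i \<noteq> i"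
  by (metis pre_v_less suc_v_neq suc_v_pre_v gr_implies_not0 not_gr0)

lemma suc_v_neq_pre_v: "3 \<le> n \<Longrightarrow> i < n \<Longrightarrow> suc_v n i \<noteq> pre_v n i"
proof
  assume n: "3 \<le> n" and i: "i < n" and eq: "suc_v n i = pre_v n i"
  then have "(int i + 1) mod int n = (int i - 1) mod int n"
    by (metis int_pre_v int_suc_v not_gr0 not_numeral_le_zero)
  then have "int n dvd 2"
    by (metis mod_eq_dvd_iff add_diff_cancel_left' diff_diff_eq2 one_add_one)
  then have "n \<le> 2"
    by (metis dvd_imp_le of_nat_dvd_iff of_nat_numeral zero_less_numeral)
  then show False using n by simp
qed

lemma grefl_fixes_vertex_or_swaps_edge: "0 < n \<Longrightarrow> \<exists>i<n. grefl n d i = i \<or> grefl n d i = suc_v n i"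
proof -
  assume n: "0 < n"
  define N where "N = nat ((int n - int d) mod int n)"
  have N: "N < n" "int N = (int n - int d) mod int n" using n by (auto simp: N_def nat_less_iff)
  define i where "i = N div 2"
  have "int (grefl n d i) = (int n - int d - int i) mod int n" using n by (simp add: int_grefl)
  also have "\<dots> = ((int n - int d) mod int n - int i) mod int n"
    by (rule mod_diff_left_eq[symmetric])
  also have "\<dots> = int (N - i)" using N by (simp add: i_def of_nat_diff)
  finally have gi: "grefl n d i = N - i" by simp
  show ?thesis
  proof (cases "even N")
    case True
    then have "grefl n d i = i" using gi by (auto simp: i_def)
    moreover have "i < n" using N by (simp add: i_def)
    ultimately show ?thesis by blast
  next
    case False
    then have "grefl n d i = i + 1" "i + 1 < n" using gi N by (auto simp: i_def elim!: oddE)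
    then show ?thesis by (metis Suc_eq_plus1 Suc_lessD mod_less suc_v_def)
  qed
qed

lemma suc_v_induct:
  assumes "v0 < n" "P v0" "\<And>i. i < n \<Longrightarrow> P i \<Longrightarrow> P (suc_v n i)" and "i < n"
  shows "P i"
proof -
  have "P ((v0 + t) mod n)" for t
  proof (induction t)
    case 0
    then show ?case using assms(1,2) by simp
  next
    case (Suc t)
    have "suc_v n ((v0 + t) mod n) = (v0 + Suc t) mod n" by (simp add: suc_v_def mod_Suc_eq)
    moreover have "(v0 + t) mod n < n" using assms(1) by simp
    ultimately show ?case using assms(3)[of "(v0 + t) mod n"] Suc by simp
  qed
  moreover have "(v0 + (i + n - v0)) mod n = i" using assms(1,4) by simp
  ultimately show ?thesis by metis
qed

section \<open>Calculus in the path algebra\<close>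

lemma sum_eq_single:
  assumes "finite A" "a \<in> A" "\<And>x. x \<in> A \<Longrightarrow> x \<noteq> a \<Longrightarrow> f x = 0"
  shows "sum f A = f a"
  using sum.remove[OF assms(1,2), of f] assms(3) by (simp add: sum.neutral)

lemma pmul_apply:
  "pmul n f h (v, l) = (\<Sum>k\<le>length l. f (v, take k l) * h (ptgt n (v, take k l), drop k l))"
proof -
  let ?split = "\<lambda>k. ((v, take k l), (ptgt n (v, take k l), drop k l))"
  have splits: "{(p, q). pcat n p q = Some (v, l)} = ?split ` {..length l}"
  proof (intro set_eqI iffI)
    fix x assume "x \<in> {(p, q). pcat n p q = Some (v, l)}"
    then obtain p1 p2 q1 q2 where x: "x = ((p1, p2), (q1, q2))"
      and "ptgt n (p1, p2) = q1" "p1 = v" "p2 @ q2 = l"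
      by (cases x) (auto simp: pcat_def split: if_splits)
    then show "x \<in> ?split ` {..length l}"
      by (auto simp: image_iff intro!: bexI[of _ "length p2"])
  qed (auto simp: pcat_def)
  have "pmul n f h (v, l) = (\<Sum>(p, q)\<in>?split ` {..length l}. f p * h q)"
    unfolding pmul_def by (rule sum.mono_neutral_left) (use splits in auto)
  also have "\<dots> = (\<Sum>k\<le>length l. f (v, take k l) * h (ptgt n (v, take k l), drop k l))"
    by (subst sum.reindex) (auto simp: inj_on_def dest: arg_cong[of _ _ length])
  finally show ?thesis .
qed

lemma bas_apply: "bas p q = (if q = p then 1 else 0)"
  by (simp add: bas_def)

lemma ev_apply: "ev i (v, l) = (if v = i \<and> l = [] then 1 else 0)"
  by (auto simp: ev_def bas_def)

lemma arrv_apply: "arrv n a (v, l) = (if v = src n a \<and> l = [a] then 1 else 0)"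
  by (auto simp: arrv_def bas_def)

lemma padd_apply: "padd f h p = f p + h p"
  by (simp add: padd_def)

lemma psc_apply: "psc c f p = c * f p"
  by (simp add: psc_def)

lemma pzero_apply: "pzero p = 0"
  by (simp add: pzero_def)

lemma padd_pzero: "padd f pzero = f"
  by (simp add: padd_def pzero_def)

lemma psc_psc: "psc a (psc b f) = psc (a * b) f"
  by (rule ext) (simp add: psc_apply)

lemma pmul_bas_vertex_left: "pmul n (bas (u, [])) f (v, l) = (if v = u then f (v, l) else 0)"
proof -
  have "pmul n (bas (u, [])) f (v, l) = bas (u, []) (v, take 0 l)
        * f (ptgt n (v, take 0 l), drop 0 l)"
    unfolding pmul_apply by (rule sum_eq_single) (auto simp: bas_apply)
  then show ?thesis by (simp add: bas_apply)
qed

lemma pmul_bas_vertex_right: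
  "pmul n f (bas (u, [])) (v, l) = (if ptgt n (v, l) = u then f (v, l) else 0)"
proof -
  have "pmul n f (bas (u, [])) (v, l)
      = f (v, take (length l) l) * bas (u, []) (ptgt n (v, take (length l) l), drop (length l) l)"
    unfolding pmul_apply by (rule sum_eq_single) (auto simp: bas_apply)
  then show ?thesis by (simp add: bas_apply)
qed

lemma pmul_bas_arrow_left:
  "pmul n (bas (u, [b])) f (v, l) = (if v = u \<and> l \<noteq> [] \<and> hd l = b then f (tgt n b, tl l) else 0)"
proof (cases l)
  case (Cons c cs)
  have "pmul n (bas (u, [b])) f (v, l) = bas (u, [b]) (v, take 1 l)
        * f (ptgt n (v, take 1 l), drop 1 l)"
    unfolding pmul_apply
    by (rule sum_eq_single) (use Cons in \<open>auto simp: bas_apply dest: arg_cong[of _ _ length]\<close>)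
  then show ?thesis using Cons by (auto simp: bas_apply)
qed (simp add: pmul_apply bas_apply)

lemma pmul_bas_arrow_right:
  "pmul n f (bas (u, [b])) (v, l)
     = (if l \<noteq> [] \<and> last l = b \<and> ptgt n (v, butlast l) = u then f (v, butlast l) else 0)"
proof (cases l rule: rev_cases)
  case (snoc cs c)
  have "pmul n f (bas (u, [b])) (v, l)
      = f (v, take (length cs) l) * bas (u, [b])
        (ptgt n (v, take (length cs) l), drop (length cs) l)"
    unfolding pmul_apply
    by (rule sum_eq_single) (use snoc in \<open>auto simp: bas_apply dest: arg_cong[of _ _ length]\<close>)
  then show ?thesis using snoc by (auto simp: bas_apply)
qed (simp add: pmul_apply bas_apply)

lemma pmul_ev_left: "pmul n (ev u) f (v, l) = (if v = u then f (v, l) else 0)"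
  by (simp add: ev_def pmul_bas_vertex_left)

lemma pmul_ev_right: "pmul n f (ev u) (v, l) = (if ptgt n (v, l) = u then f (v, l) else 0)"
  by (simp add: ev_def pmul_bas_vertex_right)

lemma pmul_arrv_left:
  "pmul n (arrv n a) f (v, l) = (if v = src n a \<and> l \<noteq> [] \<and> hd l = a then f (tgt n a, tl l) else 0)"
  by (simp add: arrv_def pmul_bas_arrow_left)

lemma pmul_arrv_right:
  "pmul n f (arrv n a) (v, l)
     = (if l \<noteq> [] \<and> last l = a \<and> ptgt n (v, butlast l) = src n a then f (v, butlast l) else 0)"
  by (simp add: arrv_def pmul_bas_arrow_right)

lemma pmul_arrv_arrv:
  "pmul n (arrv n a) (arrv n b) (v, l)
     = (if v = src n a \<and> l = [a, b] \<and> tgt n a = src n b then 1 else 0)"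
  by (cases l) (auto simp: pmul_arrv_left arrv_apply)

lemma pmul_psc_left: "pmul n (psc c f) h = psc c (pmul n f h)"
  by (rule ext, case_tac x) (simp add: pmul_apply psc_apply sum_distrib_left mult.assoc)

lemma pmul_psc_right: "pmul n f (psc c h) = psc c (pmul n f h)"
  by (rule ext, case_tac x) (simp add: pmul_apply psc_apply sum_distrib_left ac_simps)

lemma pmul_pzero_left: "pmul n pzero h = pzero"
  by (rule ext, case_tac x) (simp add: pmul_apply pzero_apply)

lemma pmul_pzero_right: "pmul n f pzero = pzero"
  by (rule ext, case_tac x) (simp add: pmul_apply pzero_apply)

lemma pmul_pone_left: "pmul n (pone n) f (v, l) = (if v < n then f (v, l) else 0)"
proof -
  have "pmul n (pone n) f (v, l) = pone n (v, take 0 l) * f (ptgt n (v, take 0 l), drop 0 l)"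
    unfolding pmul_apply by (rule sum_eq_single) (auto simp: pone_def)
  then show ?thesis by (simp add: pone_def)
qed

lemma pmul_pone_right: "pmul n f (pone n) (v, l) = (if ptgt n (v, l) < n then f (v, l) else 0)"
proof -
  have "pmul n f (pone n) (v, l)
      = f (v, take (length l) l) * pone n (ptgt n (v, take (length l) l), drop (length l) l)"
    unfolding pmul_apply by (rule sum_eq_single) (auto simp: pone_def)
  then show ?thesis by (simp add: pone_def)
qed

lemma ev_mult_ev: "pmul n (ev i) (ev j) = (if i = j then ev i else pzero)"
  by (rule ext, case_tac x) (auto simp: pmul_ev_left ev_apply pzero_apply)

lemma ev_mult_arrv: "pmul n (ev (src n a)) (arrv n a) = arrv n a"
  by (rule ext, case_tac x) (simp add: pmul_ev_left arrv_apply)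

lemma arrv_mult_ev: "pmul n (arrv n a) (ev (tgt n a)) = arrv n a"
  by (rule ext, case_tac x) (auto simp: pmul_ev_right arrv_apply ev_apply)

lemma src_less: "arr_idx a < n \<Longrightarrow> src n a < n"
  by (cases a) (simp_all add: suc_v_less)

lemma tgt_less: "arr_idx a < n \<Longrightarrow> tgt n a < n"
  by (cases a) (simp_all add: suc_v_less)

lemma PA_imp_path_ok: "f \<in> PA n \<Longrightarrow> f p \<noteq> 0 \<Longrightarrow> path_ok n p"
  by (cases p) (simp add: PA_def)

lemma bas_PA: "path_ok n p \<Longrightarrow> bas p \<in> PA n"
  by (auto simp: PA_def bas_apply)

lemma padd_PA: "f \<in> PA n \<Longrightarrow> h \<in> PA n \<Longrightarrow> padd f h \<in> PA n"
proof -
  assume "f \<in> PA n" "h \<in> PA n"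
  moreover have "{p. padd f h p \<noteq> 0} \<subseteq> {p. f p \<noteq> 0} \<union> {p. h p \<noteq> 0}"
    by (auto simp: padd_apply)
  ultimately show ?thesis unfolding PA_def by (auto simp: padd_apply intro: finite_subset)
qed

lemma psc_PA: "f \<in> PA n \<Longrightarrow> psc c f \<in> PA n"
proof -
  assume "f \<in> PA n"
  moreover have "{p. psc c f p \<noteq> 0} \<subseteq> {p. f p \<noteq> 0}" by (auto simp: psc_apply)
  ultimately show ?thesis unfolding PA_def by (auto simp: psc_apply intro: finite_subset)
qed

lemma pzero_PA: "pzero \<in> PA n"
  by (simp add: PA_def pzero_apply)

lemma pone_PA: "pone n \<in> PA n"
proof -
  have "{p. (pone n p :: 'a) \<noteq> 0} \<subseteq> (\<lambda>i. (i, [])) ` {..<n}" by (auto simp: pone_def)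
  then show ?thesis unfolding PA_def by (auto simp: pone_def intro: finite_subset)
qed

lemma ev_PA: "i < n \<Longrightarrow> ev i \<in> PA n"
  by (simp add: ev_def bas_PA)

lemma arrv_PA: "arr_idx a < n \<Longrightarrow> arrv n a \<in> PA n"
  by (cases a) (simp_all add: arrv_def bas_PA suc_v_def)

lemma pmul_arrv_arrv_PA:
  assumes "arr_idx a < n" "arr_idx b < n" "tgt n a = src n b"
  shows "pmul n (arrv n a) (arrv n b) \<in> PA n"
proof -
  have "pmul n (arrv n a) (arrv n b) = bas (src n a, [a, b])"
    by (rule ext, case_tac x) (auto simp: pmul_arrv_arrv bas_apply assms(3))
  moreover have "path_ok n (src n a, [a, b])"
    using assms by (simp add: src_less tgt_less)
  ultimately show ?thesis by (metis bas_PA)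
qed

lemma av_PA: "i < n \<Longrightarrow> av n i \<in> PA n"
  by (simp add: arrv_PA)

lemma asv_PA: "i < n \<Longrightarrow> asv n i \<in> PA n"
  by (simp add: arrv_PA)

section \<open>The ideal of preprojective relations\<close>

lemma prel_apply:
  "prel n i (v, l) = (if v = suc_v n i \<and> l = [Star i, Arr i] then 1 else 0)
                   - (if v = suc_v n i \<and> l = [Arr (suc_v n i), Star (suc_v n i)] then 1 else 0)"
  by (auto simp: prel_def pmul_arrv_arrv padd_apply psc_apply)

lemma pmul_apply_right_length2:
  assumes "\<And>v l. length l \<noteq> 2 \<Longrightarrow> h (v, l) = 0" and "length l \<le> 2"
  shows "pmul n f h (v, l) = f (v, []) * h (v, l)"
proof -
  have "pmul n f h (v, l) = f (v, take 0 l) * h (ptgt n (v, take 0 l), drop 0 l)"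
    unfolding pmul_apply by (rule sum_eq_single) (use assms in auto)
  then show ?thesis by simp
qed

lemma pmul_apply_left_length2:
  assumes "\<And>v l. length l < 2 \<Longrightarrow> f (v, l) = 0" and "length l \<le> 2"
  shows "pmul n f h (v, l) = f (v, l) * h (ptgt n (v, l), [])"
proof -
  have "pmul n f h (v, l) = f (v, take (length l) l)
        * h (ptgt n (v, take (length l) l), drop (length l) l)"
    unfolding pmul_apply by (rule sum_eq_single) (use assms in auto)
  then show ?thesis by simp
qed

text \<open>Only the vertex components of u and w contribute, since the relations have length 2.\<close>
lemma pmul_prel_apply:
  fixes u w :: "'k::field pa"
  assumes "length l \<le> 2"
  shows "pmul n (pmul n u (prel n i)) w (v, l) = u (v, []) * prel n i (v, l)
        * w (ptgt n (v, l), [])"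
proof -
  have prel0: "\<And>v l. length l \<noteq> 2 \<Longrightarrow> (prel n i (v, l) :: 'k) = 0"
    by (auto simp: prel_apply)
  have "pmul n u (prel n i) (v', l') = 0" if "length l' < 2" for v' l'
    using pmul_apply_right_length2[of "prel n i" l' n u v', OF prel0] prel0 that by simp
  then have "pmul n (pmul n u (prel n i)) w (v, l) = pmul n u (prel n i) (v, l)
        * w (ptgt n (v, l), [])"
    using assms by (intro pmul_apply_left_length2) auto
  also have "pmul n u (prel n i) (v, l) = u (v, []) * prel n i (v, l)"
    using assms prel0 by (intro pmul_apply_right_length2) auto
  finally show ?thesis .
qed

lemma omega_ideal_annihilated:
  assumes F: "F \<in> omega_ideal n" and P: "finite P"
    and ends: "\<And>p. p \<in> P \<Longrightarrow> fst p = v \<and> ptgt n p = t \<and> length (snd p) \<le> 2"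
    and kills: "\<And>i. i < n \<Longrightarrow> (\<Sum>p\<in>P. c p * prel n i p) = 0"
  shows "(\<Sum>p\<in>P. c p * F p) = 0"
proof -
  obtain L where L: "\<forall>(u, i, w) \<in> set L. i < n"
    and FL: "F = psum_list (map (\<lambda>(u, i, w). pmul n (pmul n u (prel n i)) w) L)"
    using F unfolding omega_ideal_def by fast
  have "(\<Sum>p\<in>P. c p * psum_list (map (\<lambda>(u, i, w). pmul n (pmul n u (prel n i)) w) L) p) = 0"
    using L
  proof (induction L)
    case (Cons x L)
    obtain u i w where x: "x = (u, i, w)" by (cases x)
    have "pmul n (pmul n u (prel n i)) w p = u (v, []) * prel n i p * w (t, [])" if "p \<in> P" for p
      using ends[OF that] pmul_prel_apply[of "snd p" n u i w "fst p"] by (cases p) simp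
    then have "(\<Sum>p\<in>P. c p * pmul n (pmul n u (prel n i)) w p)
        = u (v, []) * (\<Sum>p\<in>P. c p * prel n i p) * w (t, [])"
      by (simp add: sum_distrib_left sum_distrib_right ac_simps)
    also have "\<dots> = 0" using Cons.prems kills x by simp
    finally show ?case
      using Cons by (simp add: x psum_list_def padd_apply sum.distrib distrib_left)
  qed (simp add: psum_list_def pzero_apply)
  then show ?thesis by (simp add: FL)
qed

lemma omega_ideal_short_path:
  assumes "F \<in> omega_ideal n" and "length l < 2"
  shows "F (v, l) = 0"
proof -
  have prel0: "prel n i (v, l) = 0" for i
    using assms(2) by (auto simp: prel_apply)
  then show ?thesis
    using omega_ideal_annihilated[OF assms(1), of "{(v, l)}" v "ptgt n (v, l)" "\<lambda>_. 1"] assms(2)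
    by (simp add: prel0)
qed

lemma omega_ideal_non_relation_path:
  assumes "F \<in> omega_ideal n"
    and "\<not> (b1 = Arr v \<and> b2 = Star v)" and "\<not> (b1 = Star (pre_v n v) \<and> b2 = Arr (pre_v n v))"
  shows "F (v, [b1, b2]) = 0"
proof -
  have prel0: "prel n i (v, [b1, b2]) = 0" if "i < n" for i
    using that assms(2,3) by (auto simp: prel_apply pre_v_suc_v)
  then show ?thesis
    using omega_ideal_annihilated[OF assms(1), of "{(v, [b1, b2])}" v "ptgt n (v, [b1, b2])"
        "\<lambda>_. 1"]
    by (simp add: prel0)
qed

lemma omega_ideal_relation_path_sum:
  assumes "F \<in> omega_ideal n" and v: "v < n"
  shows "F (v, [Arr v, Star v]) + F (v, [Star (pre_v n v), Arr (pre_v n v)]) = 0"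
proof -
  let ?P = "{(v, [Arr v, Star v]), (v, [Star (pre_v n v), Arr (pre_v n v)])}"
  have "(\<Sum>p\<in>?P. 1 * F p) = 0"
  proof (rule omega_ideal_annihilated[OF assms(1)])
    show "fst p = v \<and> ptgt n p = v \<and> length (snd p) \<le> 2" if "p \<in> ?P" for p
      using that v by (auto simp: suc_v_pre_v)
    show "(\<Sum>p\<in>?P. 1 * prel n i p) = 0" if "i < n" for i
      using that v by (auto simp: prel_apply pre_v_suc_v)
  qed simp
  then show ?thesis by simp
qed

lemma prel_omega_ideal: "i < n \<Longrightarrow> (prel n i :: 'k::field pa) \<in> omega_ideal n"
proof -
  assume i: "i < n"
  then have "suc_v n i < n" by (simp add: suc_v_less)
  then have "pmul n (pmul n (pone n) (prel n i)) (pone n) = (prel n i :: 'k pa)"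
    by (intro ext, case_tac x) (auto simp: pmul_pone_left pmul_pone_right prel_apply)
  then show ?thesis
    unfolding omega_ideal_def using i pone_PA
    by (intro CollectI exI[of _ "[(pone n, i, pone n)]"])
       (simp add: psum_list_def padd_def pzero_def)
qed

section \<open>The Hopf ideal of the Taft algebra generated by x\<close>

definition x_homogeneous :: "('k::field) taft \<Rightarrow> nat \<Rightarrow> bool" where
  "x_homogeneous h k \<longleftrightarrow> (\<forall>z. h z \<noteq> 0 \<longrightarrow> snd z = k)"

definition x_homogeneous2 :: "('k::field) taft2 \<Rightarrow> nat \<Rightarrow> bool" where
  "x_homogeneous2 F k \<longleftrightarrow> (\<forall>p q. F (p, q) \<noteq> 0 \<longrightarrow> snd p + snd q = k)"

text \<open>The ideal generated by x: the span of the basis elements g^a x^b with b > 0.\<close>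
definition x_ideal :: "nat \<Rightarrow> nat \<Rightarrow> ('k::field) taft set" where
  "x_ideal m r = {h \<in> Tcar m r. \<forall>a. h (a, 0) = 0}"

lemma tcoef_nonzeroD:
  "tcoef lam m r z1 z2 z \<noteq> 0 \<Longrightarrow>
     (fst z1 + fst z2) mod m = fst z \<and> snd z1 + snd z2 = snd z \<and> snd z < r"
  by (simp add: tcoef_def split: if_splits)

lemma tcoef_nonzero_Tidx: "0 < m \<Longrightarrow> tcoef lam m r z1 z2 z \<noteq> 0 \<Longrightarrow> z \<in> Tidx m r"
  using tcoef_nonzeroD[of lam m r z1 z2 z] by (cases z) (auto simp: Tidx_def)

lemma tmul_nonzeroE:
  assumes "tmul lam m r f h z \<noteq> 0"
  obtains z1 z2 where "f z1 \<noteq> 0" "h z2 \<noteq> 0" "tcoef lam m r z1 z2 z \<noteq> 0"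
proof -
  obtain z1 where "(\<Sum>z2 \<in> Tidx m r. f z1 * h z2 * tcoef lam m r z1 z2 z) \<noteq> 0"
    using assms unfolding tmul_def by (blast elim: sum.not_neutral_contains_not_neutral)
  then obtain z2 where "f z1 * h z2 * tcoef lam m r z1 z2 z \<noteq> 0"
    by (blast elim: sum.not_neutral_contains_not_neutral)
  then show ?thesis by (intro that[of z1 z2]) auto
qed

lemma ttmul_nonzeroE:
  assumes "ttmul lam m r F H (p, q) \<noteq> 0"
  obtains p1 q1 p2 q2 where "F (p1, q1) \<noteq> 0" "H (p2, q2) \<noteq> 0"
    "tcoef lam m r p1 p2 p \<noteq> 0" "tcoef lam m r q1 q2 q \<noteq> 0"
proof -
  obtain p1 q1 p2 q2 where "F (p1, q1) * H (p2, q2) * tcoef lam m r p1 p2 p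
        * tcoef lam m r q1 q2 q \<noteq> 0"
    using assms unfolding ttmul_def by (auto elim!: sum.not_neutral_contains_not_neutral)
  then show ?thesis by (intro that[of p1 q1 p2 q2]) auto
qed

lemma tmul_Tcar: "0 < m \<Longrightarrow> tmul lam m r f h \<in> Tcar m r"
  unfolding Tcar_def by (blast elim: tmul_nonzeroE intro: tcoef_nonzero_Tidx)

lemma tmul_x_homogeneous:
  assumes "x_homogeneous f a" "x_homogeneous h b"
  shows "x_homogeneous (tmul lam m r f h) (a + b)"
  unfolding x_homogeneous_def
proof (intro allI impI)
  fix z assume "tmul lam m r f h z \<noteq> 0"
  then obtain z1 z2 where "f z1 \<noteq> 0" "h z2 \<noteq> 0" "tcoef lam m r z1 z2 z \<noteq> 0"
    by (rule tmul_nonzeroE)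
  then show "snd z = a + b"
    using assms tcoef_nonzeroD unfolding x_homogeneous_def by metis
qed

lemma tpow_x_homogeneous:
  assumes "x_homogeneous f d"
  shows "x_homogeneous (tpow lam m r f k) (k * d)"
proof (induction k)
  case 0
  then show ?case by (simp add: tpow_def tone_def tdelta_def x_homogeneous_def)
next
  case (Suc k)
  have "tpow lam m r f (Suc k) = tmul lam m r f (tpow lam m r f k)"
    by (simp add: tpow_def)
  then show ?case
    using tmul_x_homogeneous[OF assms Suc.IH] by simp
qed

lemma ttmul_x_homogeneous2:
  assumes "x_homogeneous2 F a" "x_homogeneous2 H b"
  shows "x_homogeneous2 (ttmul lam m r F H) (a + b)"
  unfolding x_homogeneous2_def
proof (intro allI impI)
  fix p q assume "ttmul lam m r F H (p, q) \<noteq> 0"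
  then obtain p1 q1 p2 q2 where nz: "F (p1, q1) \<noteq> 0" "H (p2, q2) \<noteq> 0"
    "tcoef lam m r p1 p2 p \<noteq> 0" "tcoef lam m r q1 q2 q \<noteq> 0"
    by (rule ttmul_nonzeroE)
  then have "snd p1 + snd q1 = a" "snd p2 + snd q2 = b"
    using assms unfolding x_homogeneous2_def by blast+
  then show "snd p + snd q = a + b"
    using tcoef_nonzeroD[OF nz(3)] tcoef_nonzeroD[OF nz(4)] by simp
qed

lemma ttpow_x_homogeneous2:
  assumes "x_homogeneous2 F d"
  shows "x_homogeneous2 (ttpow lam m r F k) (k * d)"
proof (induction k)
  case 0
  then show ?case by (simp add: ttpow_def x_homogeneous2_def ttensor_def tone_def tdelta_def)
next
  case (Suc k)
  have "ttpow lam m r F (Suc k) = ttmul lam m r F (ttpow lam m r F k)"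
    by (simp add: ttpow_def)
  then show ?case
    using ttmul_x_homogeneous2[OF assms Suc.IH] by simp
qed

lemma x_ideal_x_degree_pos: "h \<in> x_ideal m r \<Longrightarrow> h z \<noteq> 0 \<Longrightarrow> snd z \<noteq> 0"
  unfolding x_ideal_def by (metis (mono_tags, lifting) mem_Collect_eq prod.collapse)

lemma tDelta_nonzeroD:
  assumes h: "h \<in> x_ideal m r" and m: "0 < m" and nz: "tDelta lam m r h (p, q) \<noteq> 0"
  shows "p \<in> Tidx m r \<and> q \<in> Tidx m r \<and> snd p + snd q \<noteq> 0"
proof -
  let ?Dg = "ttensor (tdelta (1, 0)) (tdelta (1, 0)) :: 'a taft2"
  let ?Dx = "(\<lambda>w. ttensor (tdelta (0, 0)) (tdelta (0, 1)) w
        + ttensor (tdelta (0, 1)) (tdelta (1, 0)) w) :: 'a taft2"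
  obtain z where hz: "h z \<noteq> 0"
    and nz': "ttmul lam m r (ttpow lam m r ?Dg (fst z)) (ttpow lam m r ?Dx (snd z)) (p, q) \<noteq> 0"
    using nz unfolding tDelta_def by (auto elim!: sum.not_neutral_contains_not_neutral)
  have "x_homogeneous2 ?Dg 0" "x_homogeneous2 ?Dx 1"
    by (simp_all add: x_homogeneous2_def ttensor_def tdelta_def)
  then have "x_homogeneous2 (ttmul lam m r (ttpow lam m r ?Dg (fst z)) (ttpow lam m r ?Dx (snd z)))
      (fst z * 0 + snd z * 1)"
    by (intro ttmul_x_homogeneous2 ttpow_x_homogeneous2)
  then have "x_homogeneous2 (ttmul lam m r (ttpow lam m r ?Dg (fst z)) (ttpow lam m r ?Dx (snd z)))
      (snd z)"
    by simp
  then have "snd p + snd q = snd z" using nz' unfolding x_homogeneous2_def by blast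
  moreover have "p \<in> Tidx m r \<and> q \<in> Tidx m r"
    using nz' by (auto elim!: ttmul_nonzeroE intro: tcoef_nonzero_Tidx[OF m])
  ultimately show ?thesis using x_ideal_x_degree_pos[OF h hz] by simp
qed

lemma taft2_eq_sum_list_tensor_tdelta:
  fixes F :: "('k::field) taft2"
  assumes "distinct PL" and "\<And>z. F z \<noteq> 0 \<Longrightarrow> z \<in> set PL"
  shows "F = (\<lambda>z. sum_list (map (\<lambda>(c, u). c * u z)
                (map (\<lambda>(p, q). (F (p, q), ttensor (tdelta p) (tdelta q))) PL)))"
proof
  fix z :: "(nat \<times> nat) \<times> (nat \<times> nat)"
  have "sum_list
      (map (\<lambda>(c, u). c * u z) (map (\<lambda>(p, q). (F (p, q), ttensor (tdelta p) (tdelta q))) PL))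
      = sum_list (map (\<lambda>x. if x = z then F x else 0) PL)"
    unfolding map_map
    by (intro arg_cong[where f=sum_list] map_cong)
       (auto simp: ttensor_def tdelta_def split: prod.splits)
  also have "\<dots> = (\<Sum>x \<in> set PL. if x = z then F x else 0)"
    by (rule sum_list_distinct_conv_sum_set[OF assms(1)])
  also have "\<dots> = F z"
    using assms(2)[of z] by (cases "F z = 0") (simp_all add: sum.delta)
  finally show "F z = sum_list (map (\<lambda>(c, u). c * u z)
                  (map (\<lambda>(p, q). (F (p, q), ttensor (tdelta p) (tdelta q))) PL))"
    by simp
qed

lemma lspan_tensor_tdelta:
  fixes F :: "('k::field) taft2"
  assumes supp: "\<And>p q. F (p, q) \<noteq> 0 \<Longrightarrow> p \<in> Tidx m r \<and> q \<in> Tidx m r \<and> (snd p \<noteq> 0 \<or> snd q \<noteq> 0)"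
  shows "F \<in> lspan ({ttensor u v | u v. u \<in> x_ideal m r \<and> v \<in> Tcar m r} \<union>
                     {ttensor u v | u v. u \<in> Tcar m r \<and> v \<in> x_ideal m r})"
proof -
  let ?TI = "List.product [0..<m] [0..<r]"
  let ?PL = "filter (\<lambda>(p, q). snd p \<noteq> 0 \<or> snd q \<noteq> 0) (List.product ?TI ?TI)"
  let ?l = "map (\<lambda>(p, q). (F (p, q), ttensor (tdelta p) (tdelta q))) ?PL"
  have setPL: "set ?PL = {(p, q). p \<in> Tidx m r \<and> q \<in> Tidx m r \<and> (snd p \<noteq> 0 \<or> snd q \<noteq> 0)}"
    by (auto simp: Tidx_def)
  have tdelta_x_ideal: "tdelta p \<in> x_ideal m r" if "p \<in> Tidx m r" "snd p \<noteq> 0" for p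
    using that by (cases p) (auto simp: x_ideal_def Tcar_def tdelta_def)
  have tdelta_Tcar: "tdelta p \<in> Tcar m r" if "p \<in> Tidx m r" for p
    using that by (auto simp: Tcar_def tdelta_def)
  have "set (map snd ?l) \<subseteq> {ttensor u v | u v. u \<in> x_ideal m r \<and> v \<in> Tcar m r} \<union>
               {ttensor u v | u v. u \<in> Tcar m r \<and> v \<in> x_ideal m r}"
  proof
    fix x assume "x \<in> set (map snd ?l)"
    then obtain y where y: "y \<in> set ?PL" and x: "x = ttensor (tdelta (fst y)) (tdelta (snd y))"
      by (auto simp: case_prod_beta)
    obtain p q where "y = (p, q)" by (cases y)
    then have x: "x = ttensor (tdelta p) (tdelta q)"
      and "p \<in> Tidx m r" "q \<in> Tidx m r" "snd p \<noteq> 0 \<or> snd q \<noteq> 0"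
      using x y setPL by auto
    then show "x \<in> {ttensor u v | u v. u \<in> x_ideal m r \<and> v \<in> Tcar m r} \<union>
               {ttensor u v | u v. u \<in> Tcar m r \<and> v \<in> x_ideal m r}"
      using x tdelta_x_ideal tdelta_Tcar by blast
  qed
  moreover have "F = (\<lambda>z. sum_list (map (\<lambda>(c, u). c * u z) ?l))"
  proof (rule taft2_eq_sum_list_tensor_tdelta)
    show "distinct ?PL" by (simp add: distinct_product)
    show "z \<in> set ?PL" if "F z \<noteq> 0" for z
      using supp[of "fst z" "snd z"] that unfolding setPL by (simp add: case_prod_beta)
  qed
  ultimately show ?thesis unfolding lspan_def by blast
qed

lemma tS_x_ideal:
  assumes m: "0 < m" and h: "h \<in> x_ideal m r"
  shows "tS lam m r h \<in> x_ideal m r"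
proof -
  let ?Sx = "(\<lambda>w. - tmul lam m r (tdelta (0, 1)) (tdelta (m - 1, 0)) w) :: 'a taft"
  let ?Sg = "tdelta (m - 1, 0) :: 'a taft"
  let ?term = "\<lambda>z. tmul lam m r (tpow lam m r ?Sx (snd z)) (tpow lam m r ?Sg (fst z))"
  have "x_homogeneous (tmul lam m r (tdelta (0, 1)) (tdelta (m - 1, 0)) :: 'a taft) (1 + 0)"
    by (rule tmul_x_homogeneous) (simp_all add: x_homogeneous_def tdelta_def)
  then have "x_homogeneous ?Sx 1" "x_homogeneous ?Sg 0"
    by (simp_all add: x_homogeneous_def tdelta_def)
  then have hom: "x_homogeneous (?term z) (snd z)" for z
    using tmul_x_homogeneous tpow_x_homogeneous by (metis add_0_right mult_0_right mult_1_right)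
  have nz: "\<exists>z. h z \<noteq> 0 \<and> ?term z w \<noteq> 0" if "tS lam m r h w \<noteq> 0" for w
  proof -
    have "(\<Sum>z\<in>Tidx m r. h z * ?term z w) \<noteq> 0"
      using that unfolding tS_def .
    then obtain z where "h z * ?term z w \<noteq> 0"
      by (rule sum.not_neutral_contains_not_neutral)
    then show ?thesis by (intro exI[of _ z]) simp
  qed
  have "tS lam m r h \<in> Tcar m r"
    unfolding Tcar_def mem_Collect_eq
    using nz tmul_Tcar[OF m, unfolded Tcar_def mem_Collect_eq] by blast
  moreover have "tS lam m r h (a, 0) = 0" for a
    using nz[of "(a, 0)"] hom x_ideal_x_degree_pos[OF h] unfolding x_homogeneous_def by fastforce
  ultimately show ?thesis by (simp add: x_ideal_def)
qed

lemma tmul_x_ideal: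
  assumes m: "0 < m" and h: "h \<in> x_ideal m r"
  shows "tmul lam m r h t \<in> x_ideal m r" "tmul lam m r t h \<in> x_ideal m r"
proof -
  have "tmul lam m r h t (a, 0) = 0" "tmul lam m r t h (a, 0) = 0" for a
    using x_ideal_x_degree_pos[OF h] by (metis tmul_nonzeroE tcoef_nonzeroD add_is_0 snd_conv)+
  then show "tmul lam m r h t \<in> x_ideal m r" "tmul lam m r t h \<in> x_ideal m r"
    using tmul_Tcar[OF m] by (simp_all add: x_ideal_def)
qed

lemma hopf_ideal_x_ideal:
  fixes lam :: "'k::field"
  assumes m: "0 < m"
  shows "hopf_ideal lam m r (x_ideal m r)"
  unfolding hopf_ideal_def
proof (intro conjI ballI allI)
  fix h :: "'k taft" assume h: "h \<in> x_ideal m r"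
  show "tDelta lam m r h \<in> lspan ({ttensor u v | u v. u \<in> x_ideal m r \<and> v \<in> Tcar m r} \<union>
               {ttensor u v | u v. u \<in> Tcar m r \<and> v \<in> x_ideal m r})"
    using tDelta_nonzeroD[OF h m] by (intro lspan_tensor_tdelta) auto
  show "tS lam m r h \<in> x_ideal m r" by (rule tS_x_ideal[OF m h])
  show "teps m r h = 0" using h by (simp add: teps_def x_ideal_def)
  show "(\<lambda>z. c * h z) \<in> x_ideal m r" for c
    using h by (simp add: x_ideal_def Tcar_def)
  show "(\<lambda>z. h z + h' z) \<in> x_ideal m r" if "h' \<in> x_ideal m r" for h'
    using h that by (auto simp: x_ideal_def Tcar_def) (metis add.right_neutral)
  show "tmul lam m r h t \<in> x_ideal m r" "tmul lam m r t h \<in> x_ideal m r" for t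
    using tmul_x_ideal[OF m h] by blast+
qed (auto simp: x_ideal_def Tcar_def)

section \<open>Module algebra structures over the Taft algebra\<close>

locale taft_path_action =
  fixes n :: nat and lam :: "'k::field" and r m :: nat and G X :: "'k pa \<Rightarrow> 'k pa"
  assumes module_algebra: "taft_module_algebra n lam r m G X"
begin

lemma G_PA: "f \<in> PA n \<Longrightarrow> G f \<in> PA n"
  and X_PA: "f \<in> PA n \<Longrightarrow> X f \<in> PA n"
  and G_padd: "f \<in> PA n \<Longrightarrow> h \<in> PA n \<Longrightarrow> G (padd f h) = padd (G f) (G h)"
  and X_padd: "f \<in> PA n \<Longrightarrow> h \<in> PA n \<Longrightarrow> X (padd f h) = padd (X f) (X h)"
  and G_psc: "f \<in> PA n \<Longrightarrow> G (psc c f) = psc c (G f)"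
  and X_psc: "f \<in> PA n \<Longrightarrow> X (psc c f) = psc c (X f)"
  and G_X: "f \<in> PA n \<Longrightarrow> G (X f) = psc lam (X (G f))"
  and G_pow_m: "f \<in> PA n \<Longrightarrow> (G ^^ m) f = f"
  and X_pow_r: "f \<in> PA n \<Longrightarrow> (X ^^ r) f = pzero"
  and G_pmul: "f \<in> PA n \<Longrightarrow> h \<in> PA n \<Longrightarrow> G (pmul n f h) = pmul n (G f) (G h)"
  and X_pmul: "f \<in> PA n \<Longrightarrow> h \<in> PA n \<Longrightarrow> X (pmul n f h) = padd (pmul n f (X h)) (pmul n (X f) (G h))"
  using module_algebra by (simp_all add: taft_module_algebra_def)

lemma X_pzero: "X pzero = pzero"
  using X_psc[OF pzero_PA, of 0] by (simp add: psc_def pzero_def)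

lemma G_pzero: "G pzero = pzero"
  using G_psc[OF pzero_PA, of 0] by (simp add: psc_def pzero_def)

lemma G_funpow_pzero: "(G ^^ k) pzero = pzero"
  by (induction k) (simp_all add: G_pzero)

lemma X_eq_pzero_if_basis_support:
  assumes basis: "\<And>p. path_ok n p \<Longrightarrow> X (bas p) = pzero"
    and S: "finite S" and f: "f \<in> PA n" and supp: "{p. f p \<noteq> 0} \<subseteq> S"
  shows "X f = pzero"
  using S f supp
proof (induction S arbitrary: f rule: finite_induct)
  case empty
  then have "f = pzero" by (auto simp: pzero_def)
  then show ?case by (simp add: X_pzero)
next
  case (insert q S)
  let ?f' = "(f(q := 0)) :: 'k pa"
  have f': "?f' \<in> PA n" using insert.prems(1) unfolding PA_def by (auto elim: rev_finite_subset)
  moreover have "{p. ?f' p \<noteq> 0} \<subseteq> S" using insert.prems(2) by auto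
  ultimately have X': "X ?f' = pzero" by (rule insert.IH)
  show ?case
  proof (cases "f q = 0")
    case True
    then show ?thesis using X' by (simp add: fun_upd_idem)
  next
    case False
    then have q: "path_ok n q" using PA_imp_path_ok[OF insert.prems(1)] by blast
    have "padd (psc (f q) (bas q)) ?f' = f"
      by (rule ext) (simp add: bas_apply padd_apply psc_apply)
    moreover have "X (padd (psc (f q) (bas q)) ?f') = padd (psc (f q) (X (bas q))) (X ?f')"
      by (simp only: X_padd[OF psc_PA[OF bas_PA[OF q]] f'] X_psc[OF bas_PA[OF q]])
    ultimately show ?thesis
      using X' basis[OF q] by (simp add: padd_def psc_def pzero_def)
  qed
qed

lemma X_eq_pzero_if_generators:
  assumes gens: "\<forall>i<n. X (ev i) = pzero \<and> X (av n i) = pzero \<and> X (asv n i) = pzero"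
    and f: "f \<in> PA n"
  shows "X f = pzero"
proof (rule X_eq_pzero_if_basis_support[OF _ _ f order_refl])
  show "finite {p. f p \<noteq> 0}" using f by (simp add: PA_def)
next
  fix p :: path
  show "path_ok n p \<Longrightarrow> X (bas p) = pzero"
  proof (induction "snd p" arbitrary: p)
    case Nil
    then show ?case using gens by (cases p) (simp add: ev_def)
  next
    case (Cons b bs)
    obtain v where p: "p = (v, b # bs)" using Cons.hyps(2) by (metis prod.collapse)
    have b: "arr_idx b < n" "src n b = v" "path_ok n (tgt n b, bs)"
      using Cons.prems p by auto
    have "(bas p :: 'k pa) = pmul n (arrv n b) (bas (tgt n b, bs))"
      by (rule ext, case_tac x) (auto simp: p pmul_arrv_left bas_apply b(2))
    then have "X (bas p) = padd (pmul n (arrv n b) (X (bas (tgt n b, bs))))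
                                (pmul n (X (arrv n b)) (G (bas (tgt n b, bs))))"
      using b by (simp add: X_pmul arrv_PA bas_PA)
    moreover have "X (arrv n b) = pzero" using gens b(1) by (cases b) auto
    moreover have "X (bas (tgt n b, bs)) = pzero"
      using Cons.hyps(1)[of "(tgt n b, bs)"] b(3) by simp
    ultimately show ?case
      by (simp add: pmul_pzero_left pmul_pzero_right padd_pzero)
  qed
qed

text \<open>If x acts by zero, the Hopf ideal generated by x annihilates the path algebra.\<close>
lemma not_inner_faithful_if_X_vanishes:
  assumes m: "0 < m" and r: "1 < r" and X0: "\<forall>f\<in>PA n. X f = pzero"
  shows "\<not> inner_faithful n lam r m G X"
proof -
  have X_pow: "(X ^^ Suc k) f = pzero" if "f \<in> PA n" for k f
    using that by (induction k) (simp_all add: X0 X_pzero)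
  have "tact m r G X h f = pzero" if h: "h \<in> x_ideal m r" and f: "f \<in> PA n" for h f
  proof -
    have "h z * (G ^^ fst z) ((X ^^ snd z) f) p = 0" for z p
    proof (cases "h z = 0")
      case False
      then obtain k where "snd z = Suc k"
        using x_ideal_x_degree_pos[OF h] not0_implies_Suc by blast
      then show ?thesis using X_pow[OF f, of k] by (simp add: G_funpow_pzero pzero_apply)
    qed simp
    then show ?thesis unfolding tact_def pzero_def by (intro ext sum.neutral) simp
  qed
  moreover have "tdelta (0, 1) \<in> x_ideal m r" "tdelta (0, 1) \<noteq> (\<lambda>_. 0 :: 'k)"
    using m r
    by (auto simp: x_ideal_def Tcar_def tdelta_def Tidx_def dest: fun_cong[of _ _ "(0, 1)"])
  ultimately show ?thesis
    using hopf_ideal_x_ideal[OF m] unfolding inner_faithful_def by blast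
qed

lemma inner_faithful_X_generator_nonzero:
  assumes "inner_faithful n lam r m G X" and "0 < m" and "1 < r"
  shows "\<exists>i<n. X (ev i) \<noteq> pzero \<or> X (av n i) \<noteq> pzero \<or> X (asv n i) \<noteq> pzero"
  using assms not_inner_faithful_if_X_vanishes X_eq_pzero_if_generators by blast

end

section \<open>Actions by a reflection\<close>

locale reflection_action = taft_path_action n lam r m G X
  for n :: nat and lam :: "'k::field" and r m :: nat and G X :: "'k pa \<Rightarrow> 'k pa" +
  fixes d :: nat and \<mu> \<mu>s :: "nat \<Rightarrow> 'k"
  assumes r_gt1: "r > 1" and m_pos: "m > 0" and r_dvd_m: "r dvd m"
    and lam_pow_r: "lam ^ r = 1" and lam_primitive: "\<forall>j. 0 < j \<and> j < r \<longrightarrow> lam ^ j \<noteq> 1"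
    and r_char: "of_nat r \<noteq> (0::'k)"
    and n_ge3: "n \<ge> 3"
    and lin: "linear_action n G X"
    and inner: "inner_faithful n lam r m G X"
    and mu_nz: "\<forall>i<n. \<mu> i \<noteq> 0 \<and> \<mu>s i \<noteq> 0"
    and g_e: "\<forall>i<n. G (ev i) = ev (grefl n d i)"
    and g_a: "\<forall>i<n. G (av n i) = psc (\<mu> i) (asv n (grefl n d (i + 1)))"
    and g_as: "\<forall>i<n. G (asv n i) = psc (\<mu>s i) (av n (grefl n d (i + 1)))"
    and desc: "descends n G X"
begin

abbreviation "g \<equiv> grefl n d"
abbreviation "sv \<equiv> suc_v n"
abbreviation "pv \<equiv> pre_v n"

lemma n_pos: "0 < n"
  using n_ge3 by simp

lemma X_vert_span: "f \<in> vert_span n \<Longrightarrow> X f \<in> vert_span n"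
  and X_arrow_span: "i < n \<Longrightarrow> X (av n i) \<in> vert_arr_span n \<and> X (asv n i) \<in> vert_arr_span n"
  using lin by (simp_all add: linear_action_def)

lemma mu_nonzero: "i < n \<Longrightarrow> \<mu> i \<noteq> 0"
  and mus_nonzero: "i < n \<Longrightarrow> \<mu>s i \<noteq> 0"
  using mu_nz by auto

lemma lam_nonzero: "lam \<noteq> 0"
  using lam_pow_r r_gt1 by (metis one_neq_zero power_0_left less_imp_neq not_one_less_zero)

lemma G_av: "i < n \<Longrightarrow> G (av n i) = psc (\<mu> i) (asv n (g (sv i)))"
  using g_a by (simp add: grefl_Suc)

lemma G_asv: "i < n \<Longrightarrow> G (asv n i) = psc (\<mu>s i) (av n (g (sv i)))"
  using g_as by (simp add: grefl_Suc)

lemma fixed_vertex_facts: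
  assumes "j < n" and "g j = j"
  shows "sv (pv j) = j" "g (pv j) = sv j" "g (sv j) = pv j" "sv j \<noteq> j" "pv j \<noteq> j" "sv j \<noteq> pv j"
    "pv j < n" "sv j < n" "pv (sv j) = j"
  using assms n_ge3
  by (simp_all add: suc_v_pre_v grefl_pre_v grefl_suc_v suc_v_neq pre_v_neq suc_v_neq_pre_v
      pre_v_less suc_v_less n_pos pre_v_suc_v)

lemma swapped_edge_facts:
  assumes k: "k < n" and gk: "g k = sv k"
  shows "g (sv k) = k" "sv k \<noteq> k" "g k \<noteq> k" "sv k < n" "pv (sv k) = k"
  using grefl_suc_v_eq_iff[OF k] gk suc_v_neq[OF n_ge3 k]
  by (simp_all add: suc_v_less n_pos pre_v_suc_v k)

definition gam :: "nat \<Rightarrow> 'k" where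
  "gam i = X (ev i) (i, [])"

lemma X_ev_nonvertex:
  assumes "i < n" and "l \<noteq> []"
  shows "X (ev i) (v, l) = 0"
proof -
  have "ev i \<in> vert_span n"
    using ev_PA[OF assms(1)] unfolding vert_span_def by (auto simp: ev_apply)
  then have "X (ev i) \<in> vert_span n"
    by (rule X_vert_span)
  then show ?thesis using assms(2) by (auto simp: vert_span_def)
qed

text \<open>From e_i = e_i e_i and the twisted Leibniz rule, x e_i = e_i (x e_i) + (x e_i) e_(g i).\<close>
lemma X_ev_vertex_coeff:
  assumes i: "i < n"
  shows "X (ev i) (v, []) = (if v = i then X (ev i) (v, []) else 0)
                          + (if v = g i then X (ev i) (v, []) else 0)"
proof -
  have "X (ev i) = X (pmul n (ev i) (ev i))" by (simp add: ev_mult_ev)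
  also have "\<dots> = padd (pmul n (ev i) (X (ev i))) (pmul n (X (ev i)) (ev (g i)))"
    using i g_e by (simp add: X_pmul ev_PA)
  finally have "X (ev i) (v, [])
        = padd (pmul n (ev i) (X (ev i))) (pmul n (X (ev i)) (ev (g i))) (v, [])"
    by simp
  then show ?thesis
    by (simp add: padd_apply pmul_ev_left pmul_ev_right)
qed

lemma gam_fixed:
  assumes i: "i < n" and gi: "g i = i"
  shows "gam i = 0"
proof -
  have "X (ev i) (i, []) = X (ev i) (i, []) + X (ev i) (i, [])"
    using X_ev_vertex_coeff[OF i, of i] gi by simp
  then show ?thesis unfolding gam_def by (metis add_cancel_left_right)
qed

lemma X_ev_outside:
  assumes "i < n" "v \<noteq> i" "v \<noteq> g i"
  shows "X (ev i) (v, []) = 0"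
  using X_ev_vertex_coeff[OF assms(1), of v] assms(2,3) by simp

lemma X_ev_at_image:
  assumes i: "i < n" and gi: "g i \<noteq> i"
  shows "X (ev i) (g i, []) = - gam (g i)"
proof -
  have gi_less: "g i < n" using grefl_less n_pos by blast
  have "pzero = X (pmul n (ev (g i)) (ev i))" using gi by (simp add: ev_mult_ev X_pzero)
  also have "\<dots> = padd (pmul n (ev (g i)) (X (ev i))) (pmul n (X (ev (g i))) (ev (g i)))"
    using i gi_less g_e by (simp add: X_pmul ev_PA)
  finally have "pzero (g i, [])
        = padd (pmul n (ev (g i)) (X (ev i))) (pmul n (X (ev (g i))) (ev (g i))) (g i, [])"
    by simp
  also have "\<dots> = X (ev i) (g i, []) + gam (g i)"
    by (simp add: padd_apply pmul_ev_left pmul_ev_right gam_def)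
  finally show ?thesis by (simp add: pzero_apply eq_neg_iff_add_eq_0)
qed

lemma X_ev_apply:
  assumes i: "i < n"
  shows "X (ev i) (v, l)
    = (if l = [] then (if v = i then gam i else 0) + (if v = g i then - gam (g i) else 0) else 0)"
proof (cases "l = []")
  case True
  consider "g i = i" | "g i \<noteq> i" "v = i" | "g i \<noteq> i" "v = g i" | "v \<noteq> i" "v \<noteq> g i" by blast
  then show ?thesis
    using True X_ev_outside[OF i] X_ev_at_image[OF i] gam_fixed[OF i] X_ev_vertex_coeff[OF i, of v]
    by cases (auto simp: gam_def)
qed (simp add: X_ev_nonvertex i)

lemma X_ev_eq: "i < n \<Longrightarrow> X (ev i) = padd (psc (gam i) (ev i)) (psc (- gam (g i)) (ev (g i)))"
  by (rule ext, case_tac x) (simp add: X_ev_apply padd_apply psc_apply ev_apply)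

text \<open>Comparing both sides of g x e_i = lam x g e_i.\<close>
lemma gam_eq_lam_mult:
  assumes i: "i < n"
  shows "gam i = lam * gam (g i)" "gam (g i) = lam * gam i"
proof -
  have gi: "g i < n" "g (g i) = i" using i grefl_less n_pos grefl_grefl by blast+
  have "G (X (ev i)) = psc lam (X (ev (g i)))"
    using i g_e by (simp add: G_X ev_PA)
  moreover have "G (X (ev i)) = padd (psc (gam i) (ev (g i))) (psc (- gam (g i)) (ev i))"
    using i gi g_e by (simp add: X_ev_eq G_padd G_psc psc_PA ev_PA)
  ultimately have E: "padd (psc (gam i) (ev (g i))) (psc (- gam (g i)) (ev i))
      = psc lam (padd (psc (gam (g i)) (ev (g i))) (psc (- gam i) (ev i)))"
    using X_ev_eq[OF gi(1)] gi(2) by simp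
  show "gam i = lam * gam (g i)" "gam (g i) = lam * gam i"
    using gam_fixed[OF i] fun_cong[OF E, of "(g i, [])"] fun_cong[OF E, of "(i, [])"]
    by (cases "g i = i"; simp add: padd_apply psc_apply ev_apply)+
qed

lemma gam_image: "i < n \<Longrightarrow> gam (g i) = gam i * inverse lam"
  using gam_eq_lam_mult(1) lam_nonzero by (simp add: field_simps)

definition gmu :: "arr \<Rightarrow> 'k" where
  "gmu a = (case a of Arr i \<Rightarrow> \<mu> i | Star i \<Rightarrow> \<mu>s i)"

definition garr :: "arr \<Rightarrow> arr" where
  "garr a = (case a of Arr i \<Rightarrow> Star (g (sv i)) | Star i \<Rightarrow> Arr (g (sv i)))"

lemma G_arrv: "arr_idx a < n \<Longrightarrow> G (arrv n a) = psc (gmu a) (arrv n (garr a))"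
  by (cases a) (simp_all add: gmu_def garr_def g_a g_as grefl_Suc)

lemma src_garr: "arr_idx a < n \<Longrightarrow> src n (garr a) = g (src n a)"
  and tgt_garr: "arr_idx a < n \<Longrightarrow> tgt n (garr a) = g (tgt n a)"
  by (cases a; simp add: garr_def grefl_suc_v suc_v_pre_v grefl_less n_pos)+

lemma idx_garr: "arr_idx (garr a) < n"
  by (cases a) (simp_all add: garr_def grefl_less n_pos)

abbreviation sig :: "arr \<Rightarrow> 'k pa" where
  "sig \<equiv> qt_sigma n lam G X gam"

lemma sig_apply:
  "sig a p = X (arrv n a) p - gam (tgt n a) * arrv n a p + gam (src n a) * inverse lam
      * G (arrv n a) p"
  by (simp add: qt_sigma_def)

lemma X_arrv_long: "arr_idx a < n \<Longrightarrow> 2 \<le> length l \<Longrightarrow> X (arrv n a) (v, l) = 0"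
  using X_arrow_span[of "arr_idx a"] by (cases a) (force simp: vert_arr_span_def)+

lemma X_arrv_via_source:
  assumes a: "arr_idx a < n"
  shows "X (arrv n a)
    = padd (pmul n (ev (src n a)) (X (arrv n a)))
      (pmul n (X (ev (src n a))) (psc (gmu a) (arrv n (garr a))))"
proof -
  have "X (arrv n a) = X (pmul n (ev (src n a)) (arrv n a))" by (simp add: ev_mult_arrv)
  also have "\<dots> = padd (pmul n (ev (src n a)) (X (arrv n a)))
      (pmul n (X (ev (src n a))) (G (arrv n a)))"
    by (rule X_pmul) (simp_all add: ev_PA arrv_PA src_less a)
  finally show ?thesis using G_arrv[OF a] by simp
qed

lemma X_arrv_via_target:
  assumes a: "arr_idx a < n"
  shows "X (arrv n a)
        = padd (pmul n (arrv n a) (X (ev (tgt n a)))) (pmul n (X (arrv n a)) (ev (g (tgt n a))))"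
proof -
  have "X (arrv n a) = X (pmul n (arrv n a) (ev (tgt n a)))" by (simp add: arrv_mult_ev)
  also have "\<dots> = padd (pmul n (arrv n a) (X (ev (tgt n a))))
      (pmul n (X (arrv n a)) (G (ev (tgt n a))))"
    by (rule X_pmul) (simp_all add: ev_PA arrv_PA tgt_less a)
  finally show ?thesis using g_e tgt_less[OF a] by simp
qed

lemma X_arrv_arrow_coeff_source:
  assumes a: "arr_idx a < n"
  shows "X (arrv n a) (v, [b]) = (if v = src n a then X (arrv n a) (v, [b]) else 0)
           + gmu a * (if b = garr a \<and> v = g (src n a) then X (ev (src n a)) (v, []) else 0)"
proof -
  have "X (arrv n a) (v, [b]) = padd (pmul n (ev (src n a)) (X (arrv n a)))
      (pmul n (X (ev (src n a))) (psc (gmu a) (arrv n (garr a)))) (v, [b])"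
    using fun_cong[OF X_arrv_via_source[OF a]] .
  also have "\<dots> = (if v = src n a then X (arrv n a) (v, [b]) else 0)
           + gmu a * (if b = garr a \<and> v = g (src n a) then X (ev (src n a)) (v, []) else 0)"
    using src_garr[OF a]
    by (simp add: padd_apply pmul_ev_left pmul_psc_right psc_apply pmul_arrv_right)
  finally show ?thesis .
qed

lemma X_arrv_arrow_coeff_target:
  assumes a: "arr_idx a < n"
  shows "X (arrv n a) (v, [b]) = (if v = src n a \<and> b = a then X (ev (tgt n a)) (tgt n a, []) else 0)
           + (if tgt n b = g (tgt n a) then X (arrv n a) (v, [b]) else 0)"
proof -
  have "X (arrv n a) (v, [b])
      = padd (pmul n (arrv n a) (X (ev (tgt n a)))) (pmul n (X (arrv n a)) (ev (g (tgt n a))))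
        (v, [b])"
    using fun_cong[OF X_arrv_via_target[OF a]] .
  also have "\<dots> = (if v = src n a \<and> b = a then X (ev (tgt n a)) (tgt n a, []) else 0)
           + (if tgt n b = g (tgt n a) then X (arrv n a) (v, [b]) else 0)"
    by (simp add: padd_apply pmul_ev_right pmul_arrv_left)
  finally show ?thesis .
qed

lemma sig_vertex_support:
  assumes a: "arr_idx a < n" and nz: "sig a (v, []) \<noteq> 0"
  shows "v = src n a \<and> v = g (tgt n a)"
proof -
  let ?F = "X (arrv n a)"
  have "?F (v, []) = (if v = src n a then ?F (v, []) else 0)"
    using fun_cong[OF X_arrv_via_source[OF a], of "(v, [])"]
    by (simp add: padd_apply pmul_ev_left pmul_psc_right psc_apply pmul_arrv_right)
  moreover have "?F (v, []) = (if v = g (tgt n a) then ?F (v, []) else 0)"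
    using fun_cong[OF X_arrv_via_target[OF a], of "(v, [])"]
    by (simp add: padd_apply pmul_ev_right pmul_arrv_left)
  moreover have "?F (v, []) \<noteq> 0"
    using nz G_arrv[OF a] by (simp add: sig_apply arrv_apply psc_apply)
  ultimately show ?thesis by metis
qed

lemma sig_arrow_support:
  assumes a: "arr_idx a < n" and nz: "sig a (v, [b]) \<noteq> 0"
  shows "v = src n a \<and> tgt n b = g (tgt n a)"
proof (rule ccontr)
  let ?F = "X (arrv n a)" and ?s = "src n a" and ?t = "tgt n a"
  assume H: "\<not> (v = ?s \<and> tgt n b = g ?t)"
  have st: "?s < n" "?t < n" using a by (simp_all add: src_less tgt_less)
  have sg: "sig a (v, [b]) = ?F (v, [b]) - gam ?t * arrv n a (v, [b])
      + gam ?s * inverse lam * (gmu a * arrv n (garr a) (v, [b]))"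
    using G_arrv[OF a] by (simp add: sig_apply psc_apply)
  have "sig a (v, [b]) = 0"
  proof (cases "v = ?s")
    case False
    have "?F (v, [b]) = gmu a * (if b = garr a \<and> v = g ?s then - gam (g ?s) else 0)"
      using X_arrv_arrow_coeff_source[OF a, of v b] False st by (simp add: X_ev_apply)
    moreover have "arrv n (garr a) (v, [b]) = (if b = garr a \<and> v = g ?s then 1 else (0 :: 'k))"
      using src_garr[OF a] by (auto simp: arrv_apply)
    ultimately show ?thesis
      using sg False gam_image[OF st(1)] src_garr[OF a] by (simp add: arrv_apply)
  next
    case True
    have Z: "gam ?s * inverse lam * (gmu a * arrv n (garr a) (v, [b])) = 0"
    proof (cases "g ?s = ?s")
      case False
      then show ?thesis using True src_garr[OF a] by (simp add: arrv_apply)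
    qed (simp add: gam_fixed[OF st(1)])
    have "?F (v, [b]) = (if b = a then X (ev ?t) (?t, []) else 0)"
      using X_arrv_arrow_coeff_target[OF a, of v b] H True by simp
    moreover have "X (ev ?t) (?t, []) = gam ?t"
      using st gam_fixed[OF st(2)] by (simp add: X_ev_apply)
    moreover have "arrv n a (v, [b]) = (if b = a then 1 else (0 :: 'k))"
      using True by (simp add: arrv_apply)
    ultimately show ?thesis
      using sg[unfolded Z] by simp
  qed
  with nz show False by simp
qed

lemma sig_long_path:
  assumes a: "arr_idx a < n" and l: "2 \<le> length l"
  shows "sig a (v, l) = 0"
proof -
  have "(arrv n a (v, l) :: 'k) = 0" "(arrv n (garr a) (v, l) :: 'k) = 0"
    using l by (auto simp: arrv_apply)
  then show ?thesis using X_arrv_long[OF a l] G_arrv[OF a] by (simp add: sig_apply psc_apply)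
qed

lemma sig_path_ok:
  assumes a: "arr_idx a < n" and nz: "sig a p \<noteq> 0"
  shows "path_ok n p"
proof -
  have "X (arrv n a) p \<noteq> 0 \<or> (arrv n a p :: 'k) \<noteq> 0 \<or> G (arrv n a) p \<noteq> 0"
    using nz by (auto simp: sig_apply)
  then show ?thesis
    using PA_imp_path_ok X_PA G_PA arrv_PA[OF a] by blast
qed

lemma sig_support:
  assumes a: "arr_idx a < n" and nz: "sig a (v, l) \<noteq> 0"
  shows "v = src n a \<and> (l = [] \<or> l = [Arr (src n a)] \<or> l = [Star (pv (src n a))])"
proof -
  consider "l = []" | b where "l = [b]" | "2 \<le> length l"
    by (cases l; cases "tl l") auto
  then show ?thesis
  proof cases
    case 1
    then show ?thesis using sig_vertex_support[OF a] nz by blast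
  next
    case (2 b)
    then have v: "v = src n a" using sig_arrow_support[OF a] nz by blast
    have "path_ok n (v, [b])" using sig_path_ok[OF a, of "(v, [b])"] nz 2 by blast
    then have "b = Arr v \<or> b = Star (pv v)"
      by (cases b) (auto simp: pre_v_suc_v)
    then show ?thesis using 2 v by blast
  next
    case 3
    then show ?thesis using sig_long_path[OF a] nz by blast
  qed
qed

text \<open>Hence sigma(a_i) = cA i e_i + bA i a_i + dA i a*_(i-1) and
  sigma(a*_i) = cS i e_(i+1) + bS i a_(i+1) + dS i a*_i.\<close>
definition cA :: "nat \<Rightarrow> 'k" where
  "cA i = sig (Arr i) (i, [])"
definition bA :: "nat \<Rightarrow> 'k" where
  "bA i = sig (Arr i) (i, [Arr i])"
definition dA :: "nat \<Rightarrow> 'k" where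
  "dA i = sig (Arr i) (i, [Star (pv i)])"
definition cS :: "nat \<Rightarrow> 'k" where
  "cS i = sig (Star i) (sv i, [])"
definition bS :: "nat \<Rightarrow> 'k" where
  "bS i = sig (Star i) (sv i, [Arr (sv i)])"
definition dS :: "nat \<Rightarrow> 'k" where
  "dS i = sig (Star i) (sv i, [Star i])"

lemma sig_expand:
  assumes a: "arr_idx a < n"
  shows "sig a (v, l) = sig a (src n a, []) * ev (src n a) (v, l)
           + sig a (src n a, [Arr (src n a)]) * av n (src n a) (v, l)
           + sig a (src n a, [Star (pv (src n a))]) * asv n (pv (src n a)) (v, l)"
  using sig_support[OF a, of v l] suc_v_pre_v[OF src_less[OF a]]
  by (cases "sig a (v, l) = 0") (auto simp: ev_apply arrv_apply)

lemma sig_Arr_apply: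
  "i < n \<Longrightarrow>
     sig (Arr i) (v, l) = cA i * ev i (v, l) + bA i * av n i (v, l) + dA i * asv n (pv i) (v, l)"
  using sig_expand[of "Arr i" v l] by (simp add: cA_def bA_def dA_def)

lemma sig_Star_apply:
  "i < n \<Longrightarrow>
     sig (Star i) (v, l) = cS i * ev (sv i) (v, l) + bS i * av n (sv i) (v, l) + dS i * asv n i (v, l)"
  using sig_expand[of "Star i" v l] by (simp add: cS_def bS_def dS_def pre_v_suc_v)

lemma X_av_apply:
  assumes i: "i < n"
  shows "X (av n i) (v, l)
    = gam (sv i) * av n i (v, l) - gam i * inverse lam * \<mu> i * asv n (g (sv i)) (v, l)
      + cA i * ev i (v, l) + bA i * av n i (v, l) + dA i * asv n (pv i) (v, l)"
  using sig_apply[of "Arr i" "(v, l)"] sig_Arr_apply[OF i, of v l] G_av[OF i]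
  by (simp add: psc_apply algebra_simps)

lemma X_asv_apply:
  assumes i: "i < n"
  shows "X (asv n i) (v, l)
    = gam i * asv n i (v, l) - gam (sv i) * inverse lam * \<mu>s i * av n (g (sv i)) (v, l)
      + cS i * ev (sv i) (v, l) + bS i * av n (sv i) (v, l) + dS i * asv n i (v, l)"
  using sig_apply[of "Star i" "(v, l)"] sig_Star_apply[OF i, of v l] G_asv[OF i]
  by (simp add: psc_apply algebra_simps)

lemma cA_support: "i < n \<Longrightarrow> cA i \<noteq> 0 \<Longrightarrow> g (sv i) = i"
  using sig_vertex_support[of "Arr i" i] by (simp add: cA_def)

lemma bA_support: "i < n \<Longrightarrow> bA i \<noteq> 0 \<Longrightarrow> g (sv i) = sv i"
  using sig_arrow_support[of "Arr i" i "Arr i"] by (simp add: bA_def)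

lemma dA_support:
  assumes i: "i < n" and nz: "dA i \<noteq> 0"
  shows "g i = i"
proof -
  have "pv i = g (sv i)"
    using sig_arrow_support[of "Arr i" i "Star (pv i)"] nz i by (simp add: dA_def)
  then have "pv i = pv (g i)" using i by (simp add: grefl_suc_v)
  then show ?thesis using i by (metis grefl_less n_pos suc_v_pre_v)
qed

lemma cS_support: "i < n \<Longrightarrow> cS i \<noteq> 0 \<Longrightarrow> g i = sv i"
  using sig_vertex_support[of "Star i" "sv i"] by (simp add: cS_def)

lemma bS_support:
  assumes i: "i < n" and nz: "bS i \<noteq> 0"
  shows "g (sv i) = sv i"
proof -
  have "sv (sv i) = g i"
    using sig_arrow_support[of "Star i" "sv i" "Arr (sv i)"] nz i by (simp add: bS_def)
  then have "g (sv i) = pv (sv (sv i))" using i by (simp add: grefl_suc_v)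
  then show ?thesis using i by (simp add: pre_v_suc_v suc_v_less n_pos)
qed

lemma dS_support: "i < n \<Longrightarrow> dS i \<noteq> 0 \<Longrightarrow> g i = i"
  using sig_arrow_support[of "Star i" "sv i" "Star i"] by (simp add: dS_def)

lemma fixed_vertex_coeffs_zero:
  assumes j: "j < n" and gj: "g j = j"
  shows "cA (pv j) = 0" "dA (pv j) = 0" "cA j = 0" "bA j = 0"
    and "cS j = 0" "bS j = 0" "cS (pv j) = 0" "dS (pv j) = 0"
  using cA_support dA_support bA_support cS_support bS_support dS_support
    fixed_vertex_facts[OF j gj] j gj
  by metis+

lemma swapped_edge_coeffs_zero:
  assumes k: "k < n" and gk: "g k = sv k"
  shows "bA k = 0" "dA k = 0" "bS k = 0" "dS k = 0"
  using bA_support[OF k] dA_support[OF k] bS_support[OF k] dS_support[OF k]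
    swapped_edge_facts[OF k gk] gk
  by auto

lemma G_sig_Arr_apply:
  assumes i: "i < n"
  shows "G (sig (Arr i)) (v, l)
    = cA i * ev (g i) (v, l) + bA i * \<mu> i * asv n (g (sv i)) (v, l)
      + dA i * \<mu>s (pv i) * av n (g i) (v, l)"
proof -
  have p: "pv i < n" by (simp add: pre_v_less n_pos)
  have "sig (Arr i)
        = padd (psc (cA i) (ev i)) (padd (psc (bA i) (av n i)) (psc (dA i) (asv n (pv i))))"
    by (rule ext, case_tac x) (simp add: sig_Arr_apply i padd_apply psc_apply)
  then show ?thesis
    using i p g_e
    by (simp add: G_padd G_psc padd_PA psc_PA ev_PA av_PA asv_PA G_av G_asv padd_apply psc_apply
        suc_v_pre_v algebra_simps)
qed

lemma G_sig_Star_apply: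
  assumes i: "i < n"
  shows "G (sig (Star i)) (v, l)
    = cS i * ev (g (sv i)) (v, l) + bS i * \<mu> (sv i) * asv n (g (sv (sv i))) (v, l)
      + dS i * \<mu>s i * av n (g (sv i)) (v, l)"
proof -
  have s: "sv i < n" by (simp add: suc_v_less n_pos)
  have "sig (Star i)
        = padd (psc (cS i) (ev (sv i))) (padd (psc (bS i) (av n (sv i))) (psc (dS i) (asv n i)))"
    by (rule ext, case_tac x) (simp add: sig_Star_apply i padd_apply psc_apply)
  then show ?thesis
    using i s g_e
    by (simp add: G_padd G_psc padd_PA psc_PA ev_PA av_PA asv_PA G_av G_asv padd_apply psc_apply
        algebra_simps)
qed

text \<open>Follows from g x = lam x g and gam (g i) = gam i / lam.\<close>
lemma G_sig:
  assumes a: "arr_idx a < n"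
  shows "G (sig a) p = lam * gmu a * sig (garr a) p"
proof -
  let ?b = "garr a" and ?s = "src n a" and ?t = "tgt n a"
  have aP: "(arrv n a :: 'k pa) \<in> PA n" and bP: "(arrv n ?b :: 'k pa) \<in> PA n"
    by (simp_all add: arrv_PA a idx_garr)
  have st: "?s < n" "?t < n" using a by (simp_all add: src_less tgt_less)
  have "sig a = padd (X (arrv n a))
      (padd (psc (- gam ?t) (arrv n a)) (psc (gam ?s * inverse lam) (G (arrv n a))))"
    by (rule ext) (simp add: sig_apply padd_apply psc_apply algebra_simps)
  then have "G (sig a) = padd (psc lam (psc (gmu a) (X (arrv n ?b))))
      (padd (psc (- gam ?t) (psc (gmu a) (arrv n ?b)))
        (psc (gam ?s * inverse lam) (psc (gmu a) (G (arrv n ?b)))))"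
    using aP bP by (simp add: G_padd G_psc padd_PA psc_PA X_PA G_PA G_X G_arrv[OF a] X_psc)
  then have L: "G (sig a) p = lam * gmu a * X (arrv n ?b) p - gam ?t * gmu a * arrv n ?b p
      + gam ?s * inverse lam * gmu a * G (arrv n ?b) p"
    by (simp add: padd_apply psc_apply algebra_simps)
  have R: "sig ?b p = X (arrv n ?b) p - gam (g ?t) * arrv n ?b p + gam (g ?s) * inverse lam
        * G (arrv n ?b) p"
    using src_garr[OF a] tgt_garr[OF a] by (simp add: sig_apply)
  show ?thesis
    unfolding L R gam_image[OF st(1)]
      using lam_nonzero by (simp add: gam_eq_lam_mult(1)[OF st(2)] field_simps)
qed

lemma cA_swapped:
  assumes k: "k < n" and gk: "g k = sv k"
  shows "cA k = lam * \<mu> k * cS k"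
  using G_sig[of "Arr k" "(sv k, [])"] k swapped_edge_facts[OF k gk] gk
    swapped_edge_coeffs_zero[OF k gk]
  by (simp add: G_sig_Arr_apply gmu_def garr_def ev_apply arrv_apply cS_def)

lemma cS_swapped:
  assumes k: "k < n" and gk: "g k = sv k"
  shows "cS k = lam * \<mu>s k * cA k"
  using G_sig[of "Star k" "(k, [])"] k swapped_edge_facts[OF k gk] gk
    swapped_edge_coeffs_zero[OF k gk]
  by (simp add: G_sig_Star_apply gmu_def garr_def ev_apply arrv_apply cA_def)

lemma bA_pre_fixed:
  assumes j: "j < n" and gj: "g j = j"
  shows "bA (pv j) = lam * dS j"
proof -
  note f = fixed_vertex_facts[OF j gj] and z = fixed_vertex_coeffs_zero[OF j gj]
  have "bA (pv j) * \<mu> (pv j) = lam * \<mu> (pv j) * dS j"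
    using G_sig[of "Arr (pv j)" "(sv j, [Star j])"] j f gj z
    by (simp add: G_sig_Arr_apply sig_Star_apply gmu_def garr_def ev_apply arrv_apply)
  then show ?thesis using mu_nonzero[OF f(7)] by (simp add: field_simps)
qed

lemma dS_fixed:
  assumes j: "j < n" and gj: "g j = j"
  shows "dS j = lam * bA (pv j)"
proof -
  note f = fixed_vertex_facts[OF j gj] and z = fixed_vertex_coeffs_zero[OF j gj]
  have "dS j * \<mu>s j = lam * \<mu>s j * bA (pv j)"
    using G_sig[of "Star j" "(pv j, [Arr (pv j)])"] j f gj z
    by (simp add: G_sig_Star_apply sig_Arr_apply gmu_def garr_def ev_apply arrv_apply)
  then show ?thesis using mus_nonzero[OF j] by (simp add: field_simps)
qed

lemma dA_fixed:
  assumes j: "j < n" and gj: "g j = j"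
  shows "dA j * \<mu>s (pv j) = lam * \<mu> j * bS (pv j)"
  using G_sig[of "Arr j" "(j, [Arr j])"] j fixed_vertex_facts[OF j gj] gj
    fixed_vertex_coeffs_zero[OF j gj]
  by (simp add: G_sig_Arr_apply sig_Star_apply gmu_def garr_def ev_apply arrv_apply)

lemma bS_pre_fixed:
  assumes j: "j < n" and gj: "g j = j"
  shows "bS (pv j) * \<mu> j = lam * \<mu>s (pv j) * dA j"
  using G_sig[of "Star (pv j)" "(j, [Star (pv j)])"] j fixed_vertex_facts[OF j gj] gj
    fixed_vertex_coeffs_zero[OF j gj]
  by (simp add: G_sig_Star_apply sig_Arr_apply gmu_def garr_def ev_apply arrv_apply)

lemma X_prel_apply:
  assumes i: "i < n"
  shows "X (prel n i) (v, l)
    = pmul n (asv n i) (X (av n i)) (v, l) + \<mu> i * pmul n (X (asv n i)) (asv n (g (sv i))) (v, l)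
      - (pmul n (av n (sv i)) (X (asv n (sv i))) (v, l)
         + \<mu>s (sv i) * pmul n (X (av n (sv i))) (av n (g (sv (sv i)))) (v, l))"
proof -
  have si: "sv i < n" by (simp add: suc_v_less n_pos)
  have P1: "(pmul n (asv n i) (av n i) :: 'k pa) \<in> PA n"
    by (rule pmul_arrv_arrv_PA) (simp_all add: i)
  have P2: "(pmul n (av n (sv i)) (asv n (sv i)) :: 'k pa) \<in> PA n"
    by (rule pmul_arrv_arrv_PA) (simp_all add: si)
  have "X (prel n i)
        = padd (X (pmul n (asv n i) (av n i))) (psc (-1) (X (pmul n (av n (sv i)) (asv n (sv i)))))"
    unfolding prel_def using P1 P2 by (simp add: X_padd X_psc psc_PA)
  also have "X (pmul n (asv n i) (av n i))
        = padd (pmul n (asv n i) (X (av n i))) (pmul n (X (asv n i)) (G (av n i)))"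
    by (rule X_pmul) (simp_all add: i asv_PA av_PA)
  also have "X (pmul n (av n (sv i)) (asv n (sv i)))
        = padd (pmul n (av n (sv i)) (X (asv n (sv i))))
          (pmul n (X (av n (sv i))) (G (asv n (sv i))))"
    by (rule X_pmul) (simp_all add: si asv_PA av_PA)
  finally have E: "X (prel n i)
        = padd (padd (pmul n (asv n i) (X (av n i)))
          (pmul n (X (asv n i)) (psc (\<mu> i) (asv n (g (sv i))))))
      (psc (- 1) (padd (pmul n (av n (sv i)) (X (asv n (sv i))))
        (pmul n (X (av n (sv i))) (psc (\<mu>s (sv i)) (av n (g (sv (sv i))))))))"
    using i si by (simp add: G_av G_asv)
  show ?thesis unfolding E pmul_psc_right by (simp add: padd_apply psc_apply)
qed

lemma G_prel_apply:
  assumes i: "i < n"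
  shows "G (prel n i) (v, l) = \<mu>s i * \<mu> i * pmul n (av n (g (sv i))) (asv n (g (sv i))) (v, l)
    - \<mu> (sv i) * \<mu>s (sv i) * pmul n (asv n (g (sv (sv i)))) (av n (g (sv (sv i)))) (v, l)"
proof -
  have si: "sv i < n" by (simp add: suc_v_less n_pos)
  have P1: "(pmul n (asv n i) (av n i) :: 'k pa) \<in> PA n"
    by (rule pmul_arrv_arrv_PA) (simp_all add: i)
  have P2: "(pmul n (av n (sv i)) (asv n (sv i)) :: 'k pa) \<in> PA n"
    by (rule pmul_arrv_arrv_PA) (simp_all add: si)
  have "G (prel n i)
        = padd (G (pmul n (asv n i) (av n i))) (psc (-1) (G (pmul n (av n (sv i)) (asv n (sv i)))))"
    unfolding prel_def using P1 P2 by (simp add: G_padd G_psc psc_PA)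
  also have "G (pmul n (asv n i) (av n i)) = pmul n (G (asv n i)) (G (av n i))"
    by (rule G_pmul) (simp_all add: i asv_PA av_PA)
  also have "G (pmul n (av n (sv i)) (asv n (sv i))) = pmul n (G (av n (sv i))) (G (asv n (sv i)))"
    by (rule G_pmul) (simp_all add: si asv_PA av_PA)
  finally have E: "G (prel n i)
        = padd (pmul n (psc (\<mu>s i) (av n (g (sv i)))) (psc (\<mu> i) (asv n (g (sv i)))))
      (psc (- 1) (pmul n (psc (\<mu> (sv i)) (asv n (g (sv (sv i)))))
        (psc (\<mu>s (sv i)) (av n (g (sv (sv i)))))))"
    using i si by (simp add: G_av G_asv)
  show ?thesis unfolding E pmul_psc_right pmul_psc_left
    by (simp add: padd_apply psc_apply algebra_simps)
qed

lemma X_prel_omega: "i < n \<Longrightarrow> X (prel n i) \<in> omega_ideal n"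
  and G_prel_omega: "i < n \<Longrightarrow> G (prel n i) \<in> omega_ideal n"
  using desc prel_omega_ideal unfolding descends_def by blast+

definition mu_prod :: "nat \<Rightarrow> 'k" where
  "mu_prod i = \<mu> i * \<mu>s i"

text \<open>The two paths of the relation at g (i + 1) appear in g applied to the relation at i.\<close>
lemma mu_prod_suc_v:
  assumes i: "i < n"
  shows "mu_prod (sv i) = mu_prod i"
proof -
  let ?q = "g (sv i)"
  have si: "sv i < n" by (simp add: suc_v_less n_pos)
  have q: "?q < n" by (simp add: grefl_less n_pos)
  have gss: "g (sv (sv i)) = pv ?q" using si by (simp add: grefl_suc_v)
  have "G (prel n i) (?q, [Arr ?q, Star ?q]) + G (prel n i) (?q, [Star (pv ?q), Arr (pv ?q)]) = 0"
    by (rule omega_ideal_relation_path_sum[OF G_prel_omega[OF i] q])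
  moreover have "G (prel n i) (?q, [Arr ?q, Star ?q]) = \<mu>s i * \<mu> i"
    using q gss by (simp add: G_prel_apply[OF i] pmul_arrv_arrv pre_v_less n_pos suc_v_pre_v)
  moreover have "G (prel n i) (?q, [Star (pv ?q), Arr (pv ?q)]) = - (\<mu> (sv i) * \<mu>s (sv i))"
    using q gss by (simp add: G_prel_apply[OF i] pmul_arrv_arrv pre_v_less n_pos suc_v_pre_v)
  ultimately show ?thesis by (simp add: mu_prod_def algebra_simps)
qed

text \<open>The relation ideal has no component on paths of length 1; read off x of the relation at k
  on the path a*_k.\<close>
lemma swapped_edge_relation:
  assumes k: "k < n" and gk: "g k = sv k"
  shows "cA k + \<mu> k * cS k = 0"
proof -
  note kf = swapped_edge_facts[OF k gk]
  have "X (prel n k) (sv k, [Star k]) = 0"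
    by (rule omega_ideal_short_path[OF X_prel_omega[OF k]]) simp
  moreover have "X (prel n k) (sv k, [Star k]) = cA k + \<mu> k * cS k"
    using k kf
    by (simp add: X_prel_apply pmul_arrv_left pmul_arrv_right X_av_apply X_asv_apply ev_apply arrv_apply)
  ultimately show ?thesis by simp
qed

lemma fixed_vertex_relation:
  assumes j: "j < n" and gj: "g j = j"
  shows "dA j + \<mu> j * dS j = 0"
proof -
  note f = fixed_vertex_facts[OF j gj] and z = fixed_vertex_coeffs_zero[OF j gj]
  have "X (prel n j) (sv j, [Star j, Star (pv j)]) = 0"
    by (rule omega_ideal_non_relation_path[OF X_prel_omega[OF j]]) simp_all
  moreover have "X (prel n j) (sv j, [Star j, Star (pv j)]) = dA j + \<mu> j * dS j"
    using j f gj z gam_fixed[OF j gj]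
    by (simp add: X_prel_apply pmul_arrv_left pmul_arrv_right X_av_apply X_asv_apply ev_apply arrv_apply)
  ultimately show ?thesis by simp
qed

lemma fixed_vertex_loop_relation:
  assumes j: "j < n" and gj: "g j = j"
  shows "bA (pv j) - \<mu>s j * dA j + (\<mu> (pv j) * bS (pv j) - dS j) = 0"
proof -
  note f = fixed_vertex_facts[OF j gj] and z = fixed_vertex_coeffs_zero[OF j gj]
  have "X (prel n (pv j)) (j, [Arr j, Star j])
      + X (prel n (pv j)) (j, [Star (pv j), Arr (pv j)]) = 0"
    by (rule omega_ideal_relation_path_sum[OF X_prel_omega[OF f(7)] j])
  moreover have "X (prel n (pv j)) (j, [Star (pv j), Arr (pv j)]) = bA (pv j) - \<mu>s j * dA j"
    using j f gj z gam_fixed[OF j gj]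
    by (simp add: X_prel_apply pmul_arrv_left pmul_arrv_right X_av_apply X_asv_apply ev_apply arrv_apply)
  moreover have "X (prel n (pv j)) (j, [Arr j, Star j]) = \<mu> (pv j) * bS (pv j) - dS j"
    using j f gj z gam_fixed[OF j gj]
    by (simp add: X_prel_apply pmul_arrv_left pmul_arrv_right X_av_apply X_asv_apply ev_apply arrv_apply)
  ultimately show ?thesis by (simp add: algebra_simps)
qed

subsection \<open>Inner faithfulness forces lam = -1\<close>

text \<open>By the support lemmas, x on the generators is determined by gam, by cA, cS at edges
  swapped by g, and by bA, dA, bS, dS around fixed vertices, so these cannot all vanish.\<close>
lemma x_data_not_all_zero:
  assumes G0: "\<forall>i<n. gam i = 0"
    and K0: "\<forall>k<n. g k = sv k \<longrightarrow> cA k = 0 \<and> cS k = 0"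
    and F0: "\<forall>j<n. g j = j \<longrightarrow> bA (pv j) = 0 \<and> dA j = 0 \<and> bS (pv j) = 0 \<and> dS j = 0"
  shows False
proof -
  have "X (ev i) = pzero \<and> X (av n i) = pzero \<and> X (asv n i) = pzero" if i: "i < n" for i
  proof -
    have si: "sv i < n" "pv (sv i) = i" using i by (simp_all add: suc_v_less n_pos pre_v_suc_v)
    have "cA i = 0" "cS i = 0"
      using K0 cA_support[OF i] cS_support[OF i] grefl_suc_v_eq_iff[OF i] i by blast+
    moreover have "bA i = 0" "bS i = 0"
      using F0 bA_support[OF i] bS_support[OF i] si by metis+
    moreover have "dA i = 0" "dS i = 0"
      using F0 dA_support[OF i] dS_support[OF i] i by blast+
    moreover have "gam i = 0" "gam (sv i) = 0" "gam (g i) = 0"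
      using G0 i si grefl_less n_pos by auto
    ultimately show ?thesis
      by (auto intro!: ext simp: X_ev_apply[OF i] X_av_apply[OF i] X_asv_apply[OF i] pzero_apply)
  qed
  then show False
    using inner_faithful_X_generator_nonzero[OF inner m_pos r_gt1] by blast
qed

lemma gam_zero_if_lam_sq_neq_1:
  assumes "lam * lam \<noteq> 1" and i: "i < n"
  shows "gam i = 0"
proof -
  have "gam i = lam * (lam * gam i)"
    using gam_eq_lam_mult[OF i] by simp
  then have "(1 - lam * lam) * gam i = 0" by (simp add: algebra_simps)
  then show ?thesis using assms(1) by simp
qed

lemma swapped_edge_coeffs_zero_if_lam_neq_minus_1:
  assumes "lam \<noteq> -1" and k: "k < n" and gk: "g k = sv k"
  shows "cA k = 0 \<and> cS k = 0"
proof -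
  have "(lam + 1) * (\<mu> k * cS k) = 0"
    using cA_swapped[OF k gk] swapped_edge_relation[OF k gk] by (simp add: algebra_simps)
  moreover have "lam + 1 \<noteq> 0" using assms(1) by (simp add: add_eq_0_iff2)
  ultimately have "cS k = 0" using mu_nonzero[OF k] by simp
  then show ?thesis using cA_swapped[OF k gk] by simp
qed

lemma fixed_vertex_coeffs_zero_if_lam_sq_neq_1:
  assumes L: "lam * lam \<noteq> 1" and j: "j < n" and gj: "g j = j"
  shows "bA (pv j) = 0 \<and> dA j = 0 \<and> bS (pv j) = 0 \<and> dS j = 0"
proof -
  have p: "pv j < n" by (rule fixed_vertex_facts(7)[OF j gj])
  have "(1 - lam * lam) * bA (pv j) = 0"
    using bA_pre_fixed[OF j gj] dS_fixed[OF j gj] by (simp add: algebra_simps)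
  then have bA0: "bA (pv j) = 0" using L by simp
  have "(1 - lam * lam) * (\<mu>s (pv j) * dA j) = 0"
    using dA_fixed[OF j gj] bS_pre_fixed[OF j gj] by (simp add: algebra_simps)
  then have dA0: "dA j = 0" using L mus_nonzero[OF p] by simp
  then have "bS (pv j) = 0" using bS_pre_fixed[OF j gj] mu_nonzero[OF j] by simp
  then show ?thesis using bA0 dA0 dS_fixed[OF j gj] by simp
qed

lemma lam_sq_eq_1: "lam * lam = 1"
proof (rule ccontr)
  assume L: "lam * lam \<noteq> 1"
  then have "lam \<noteq> -1" by auto
  then show False
    using x_data_not_all_zero gam_zero_if_lam_sq_neq_1[OF L]
      swapped_edge_coeffs_zero_if_lam_neq_minus_1 fixed_vertex_coeffs_zero_if_lam_sq_neq_1[OF L]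
    by blast
qed

lemma lam_eq_minus_1: "lam = -1"
proof -
  have "lam \<noteq> 1" using lam_primitive r_gt1 by (metis power_one_right zero_less_one)
  moreover have "(lam - 1) * (lam + 1) = 0" using lam_sq_eq_1 by (simp add: algebra_simps)
  ultimately show ?thesis by (simp add: add_eq_0_iff2)
qed

lemma r_eq_2: "r = 2"
proof (rule ccontr)
  assume "r \<noteq> 2"
  then have "lam ^ 2 \<noteq> 1" using lam_primitive r_gt1 by simp
  then show False using lam_sq_eq_1 by (simp add: power2_eq_square)
qed

lemma two_nonzero: "(2::'k) \<noteq> 0"
  using r_char r_eq_2 by simp

lemma X_X: "f \<in> PA n \<Longrightarrow> X (X f) = pzero"
  using X_pow_r r_eq_2 by (simp add: numeral_2_eq_2)

lemma gam_image_neg: "i < n \<Longrightarrow> gam (g i) = - gam i"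
  using gam_eq_lam_mult(2) lam_eq_minus_1 by simp

lemma X_lincomb5:
  assumes "f1 \<in> PA n" "f2 \<in> PA n" "f3 \<in> PA n" "f4 \<in> PA n" "f5 \<in> PA n"
  shows "X (padd (psc a1 f1) (padd (psc a2 f2) (padd (psc a3 f3) (padd (psc a4 f4) (psc a5 f5))))) p
    = a1 * X f1 p + a2 * X f2 p + a3 * X f3 p + a4 * X f4 p + a5 * X f5 p"
  using assms by (simp add: X_padd X_psc padd_PA psc_PA padd_apply psc_apply add.assoc)

lemma X_av_eq:
  "i < n \<Longrightarrow> X (av n i)
      = padd (psc (gam (sv i)) (av n i))
        (padd (psc (- (gam i * inverse lam * \<mu> i)) (asv n (g (sv i))))
     (padd (psc (cA i) (ev i)) (padd (psc (bA i) (av n i)) (psc (dA i) (asv n (pv i))))))"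
  by (rule ext, case_tac x) (simp add: X_av_apply padd_apply psc_apply)

lemma X_X_av_apply:
  assumes i: "i < n"
  shows "0 = gam (sv i) * X (av n i) p - gam i * inverse lam * \<mu> i * X (asv n (g (sv i))) p
    + cA i * X (ev i) p + bA i * X (av n i) p + dA i * X (asv n (pv i)) p"
proof -
  have "X (X (av n i))
        = X (padd (psc (gam (sv i)) (av n i))
          (padd (psc (- (gam i * inverse lam * \<mu> i)) (asv n (g (sv i))))
     (padd (psc (cA i) (ev i)) (padd (psc (bA i) (av n i)) (psc (dA i) (asv n (pv i)))))))"
    by (simp only: X_av_eq[OF i])
  then have "X (X (av n i)) p = gam (sv i) * X (av n i) p + (- (gam i * inverse lam * \<mu> i))
        * X (asv n (g (sv i))) p
    + cA i * X (ev i) p + bA i * X (av n i) p + dA i * X (asv n (pv i)) p"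
    by (simp only:)
       (rule X_lincomb5, simp_all add: i av_PA asv_PA ev_PA grefl_less pre_v_less n_pos)
  then show ?thesis using X_X[OF av_PA[OF i]] by (simp add: pzero_apply)
qed

text \<open>The coefficient of a_i in x^2 a_i.\<close>
lemma gam_suc_v_sq:
  assumes i: "i < n" and h1: "g i \<noteq> i" and h2: "g (sv i) \<noteq> sv i"
  shows "gam (sv i) ^ 2 = \<mu> i * \<mu>s (g (sv i)) * gam i ^ 2"
proof -
  let ?q = "g (sv i)"
  have q: "?q < n" by (simp add: grefl_less n_pos)
  have sq: "sv ?q = g i" using i by (simp add: grefl_suc_v suc_v_pre_v grefl_less n_pos)
  have gsq: "g (sv ?q) = i" using sq i by (simp add: grefl_grefl)
  have z: "bA i = 0" "dA i = 0" using bA_support[OF i] dA_support[OF i] h1 h2 by auto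
  have "X (av n i) (i, [Arr i]) = gam (sv i)"
    using i z by (simp add: X_av_apply ev_apply arrv_apply)
  moreover have "X (asv n ?q) (i, [Arr i]) = - gam (g i) * inverse lam * \<mu>s ?q"
    using q sq gsq h1 by (simp add: X_asv_apply ev_apply arrv_apply)
  moreover have "X (ev i) (i, [Arr i]) = 0" using i by (simp add: X_ev_apply)
  ultimately have
    "0 = gam (sv i) * gam (sv i) - gam i * inverse lam * \<mu> i * (- gam (g i) * inverse lam * \<mu>s ?q)"
    using X_X_av_apply[OF i, of "(i, [Arr i])"] z by simp
  then show ?thesis
    using gam_image_neg[OF i] lam_eq_minus_1 by (simp add: power2_eq_square algebra_simps)
qed

text \<open>The coefficient of a_(j-1) in x^2 a_(j-1) for a fixed vertex j.\<close>
lemma bA_pre_fixed_sq: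
  assumes j: "j < n" and gj: "g j = j"
  shows "bA (pv j) ^ 2 = gam (pv j) ^ 2 * \<mu> (pv j) * \<mu>s j"
proof -
  note f = fixed_vertex_facts[OF j gj] and z = fixed_vertex_coeffs_zero[OF j gj]
  let ?p = "pv j"
  have gj0: "gam j = 0" by (rule gam_fixed[OF j gj])
  have gg: "gam (sv j) = - gam ?p" using gam_image_neg[OF f(7)] f by simp
  have "X (av n ?p) (?p, [Arr ?p]) = bA ?p"
    using f z gj0 by (simp add: X_av_apply ev_apply arrv_apply)
  moreover have "X (asv n j) (?p, [Arr ?p]) = - gam (sv j) * inverse lam * \<mu>s j"
    using j f z by (simp add: X_asv_apply ev_apply arrv_apply)
  ultimately have
    "0 = - gam ?p * inverse lam * \<mu> ?p * (- gam (sv j) * inverse lam * \<mu>s j) + bA ?p * bA ?p"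
    using X_X_av_apply[OF f(7), of "(?p, [Arr ?p])"] f z gj0 gj by simp
  then show ?thesis using gg lam_eq_minus_1 by (simp add: power2_eq_square algebra_simps)
qed

lemma mu_prod_const: "i < n \<Longrightarrow> mu_prod i = mu_prod 0"
  by (rule suc_v_induct[OF n_pos, where P = "\<lambda>i. mu_prod i = mu_prod 0"])
     (simp_all add: mu_prod_suc_v)

lemma fixed_vertex_dA:
  assumes j: "j < n" and gj: "g j = j"
  shows "dA j = \<mu> j * bA (pv j)"
proof -
  have "dS j = - bA (pv j)" using dS_fixed[OF j gj] lam_eq_minus_1 by simp
  then show ?thesis using fixed_vertex_relation[OF j gj] by (simp add: algebra_simps add_eq_0_iff)
qed

lemma fixed_vertex_bS:
  assumes j: "j < n" and gj: "g j = j"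
  shows "\<mu> (pv j) * bS (pv j) = - (mu_prod (pv j) * bA (pv j))"
proof -
  have "\<mu> j * (\<mu> (pv j) * bS (pv j)) = \<mu> (pv j) * (bS (pv j) * \<mu> j)" by (simp add: algebra_simps)
  also have "\<dots> = \<mu> j * (- (mu_prod (pv j) * bA (pv j)))"
    using bS_pre_fixed[OF j gj] fixed_vertex_dA[OF j gj] lam_eq_minus_1
    by (simp add: mu_prod_def algebra_simps)
  finally have "\<mu> j * (\<mu> (pv j) * bS (pv j)) = \<mu> j * (- (mu_prod (pv j) * bA (pv j)))" .
  then show ?thesis using mu_nonzero[OF j] by (metis mult_left_cancel)
qed

lemma fixed_vertex_mu_prod:
  assumes j: "j < n" and gj: "g j = j"
  shows "2 * ((1 - mu_prod 0) * bA (pv j)) = 0"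
proof -
  have "bA (pv j) - mu_prod j * bA (pv j) - mu_prod (pv j) * bA (pv j) + bA (pv j) = 0"
    using fixed_vertex_loop_relation[OF j gj] dS_fixed[OF j gj] fixed_vertex_dA[OF j gj]
      fixed_vertex_bS[OF j gj] lam_eq_minus_1
    by (simp add: mu_prod_def algebra_simps)
  then show ?thesis
    using mu_prod_const[OF j] mu_prod_const[OF fixed_vertex_facts(7)[OF j gj]]
    by (simp add: algebra_simps)
qed

lemma swapped_edge_zero_if_mu_prod_neq_1:
  assumes C: "mu_prod 0 \<noteq> 1" and k: "k < n" and gk: "g k = sv k"
  shows "cA k = 0 \<and> cS k = 0 \<and> gam k = 0"
proof -
  note kf = swapped_edge_facts[OF k gk]
  have Ck: "1 - mu_prod k \<noteq> 0" using C mu_prod_const[OF k] by simp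
  have "(1 - mu_prod k) * cA k = 0"
    using cA_swapped[OF k gk] cS_swapped[OF k gk] lam_eq_minus_1
    by (simp add: mu_prod_def algebra_simps)
  then have cA0: "cA k = 0" using Ck by simp
  have "gam k ^ 2 = mu_prod k * gam k ^ 2"
    using gam_suc_v_sq[OF k] gam_image_neg[OF k] kf gk by (simp add: mu_prod_def)
  then have "(1 - mu_prod k) * gam k ^ 2 = 0" by (simp add: algebra_simps)
  then have "gam k = 0" using Ck by simp
  then show ?thesis using cA0 cS_swapped[OF k gk] by simp
qed

lemma fixed_vertex_zero_if_mu_prod_neq_1:
  assumes C: "mu_prod 0 \<noteq> 1" and j: "j < n" and gj: "g j = j"
  shows "bA (pv j) = 0 \<and> dA j = 0 \<and> bS (pv j) = 0 \<and> dS j = 0 \<and> gam (pv j) = 0"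
proof -
  have p: "pv j < n" by (rule fixed_vertex_facts(7)[OF j gj])
  have bA0: "bA (pv j) = 0" using fixed_vertex_mu_prod[OF j gj] two_nonzero C by simp
  have "gam (pv j) ^ 2 * \<mu> (pv j) * \<mu>s j = 0" using bA_pre_fixed_sq[OF j gj] bA0 by simp
  then have "gam (pv j) = 0" using mu_nonzero[OF p] mus_nonzero[OF j] by simp
  then show ?thesis
    using bA0 fixed_vertex_dA[OF j gj] fixed_vertex_bS[OF j gj] dS_fixed[OF j gj] mu_nonzero[OF p]
    by simp
qed

text \<open>Propagate the vanishing of gam around the cycle, starting from a fixed vertex or a
  swapped edge.\<close>
lemma gam_zero_if_mu_prod_neq_1:
  assumes C: "mu_prod 0 \<noteq> 1" and i: "i < n"
  shows "gam i = 0"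
proof -
  obtain v0 where v0: "v0 < n" "g v0 = v0 \<or> g v0 = sv v0"
    using grefl_fixes_vertex_or_swaps_edge[OF n_pos] by blast
  have step: "gam (sv i) = 0" if i: "i < n" and gi: "gam i = 0" for i
  proof -
    consider "g (sv i) = sv i" | "g i = i" | "g i \<noteq> i" "g (sv i) \<noteq> sv i" by blast
    then show ?thesis
    proof cases
      case 1
      then show ?thesis using gam_fixed suc_v_less n_pos by blast
    next
      case 2
      then show ?thesis
        using fixed_vertex_zero_if_mu_prod_neq_1[OF C i] gam_image_neg fixed_vertex_facts[OF i]
        by (metis neg_equal_0_iff_equal)
    next
      case 3
      then show ?thesis using gam_suc_v_sq[OF i] gi by simp
    qed
  qed
  have "gam v0 = 0"
    using gam_fixed[OF v0(1)] swapped_edge_zero_if_mu_prod_neq_1[OF C v0(1)] v0(2) by blast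
  then show ?thesis
    using suc_v_induct[of v0 n "\<lambda>i. gam i = 0", OF v0(1) _ step i] by blast
qed

lemma mu_prod_eq_1: "mu_prod 0 = 1"
proof (rule ccontr)
  assume C: "mu_prod 0 \<noteq> 1"
  show False
  proof (rule x_data_not_all_zero)
    show "\<forall>i<n. gam i = 0" using gam_zero_if_mu_prod_neq_1[OF C] by blast
    show "\<forall>k<n. g k = sv k \<longrightarrow> cA k = 0 \<and> cS k = 0"
      using swapped_edge_zero_if_mu_prod_neq_1[OF C] by blast
    show "\<forall>j<n. g j = j \<longrightarrow> bA (pv j) = 0 \<and> dA j = 0 \<and> bS (pv j) = 0 \<and> dS j = 0"
      using fixed_vertex_zero_if_mu_prod_neq_1[OF C] by blast
  qed
qed

lemma mus_eq_inverse:
  assumes i: "i < n"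
  shows "\<mu>s i = inverse (\<mu> i)"
proof -
  have "\<mu> i * \<mu>s i = 1"
    using mu_prod_const[OF i] mu_prod_eq_1 by (simp add: mu_prod_def)
  then show ?thesis using mu_nonzero[OF i] by (simp add: field_simps)
qed

lemma G_G_av:
  assumes i: "i < n"
  shows "G (G (av n i)) = psc (\<mu> i * \<mu>s (g (sv i))) (av n i)"
proof -
  let ?q = "g (sv i)"
  have q: "?q < n" by (simp add: grefl_less n_pos)
  have "g (sv ?q) = i" using i by (simp add: grefl_suc_v suc_v_pre_v grefl_less n_pos grefl_grefl)
  then have "G (G (av n i)) = psc (\<mu> i) (psc (\<mu>s ?q) (av n i))"
    using G_av[OF i] G_asv[OF q] by (simp add: G_psc asv_PA q)
  then show ?thesis by (simp add: psc_psc)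
qed

lemma G_pow_av:
  assumes i: "i < n"
  shows "(G ^^ (2 * k)) (av n i) = psc ((\<mu> i * \<mu>s (g (sv i))) ^ k) (av n i)"
proof (induction k)
  case 0
  then show ?case by (rule ext) (simp add: psc_apply)
next
  case (Suc k)
  have "(G ^^ (2 * Suc k)) (av n i) = G (G ((G ^^ (2 * k)) (av n i)))"
    by (simp add: numeral_2_eq_2)
  also have "\<dots> = psc ((\<mu> i * \<mu>s (g (sv i))) ^ k) (G (G (av n i)))"
    using Suc.IH i by (simp add: G_psc G_PA av_PA)
  finally show ?case using G_G_av[OF i] by (simp add: psc_psc algebra_simps)
qed

text \<open>g^m = 1 applied to a_i, using that g^2 a_i is a multiple of a_i.\<close>
lemma mu_ratio_pow:
  assumes i: "i < n"
  shows "(\<mu> i * inverse (\<mu> (grefl n d (i + 1)))) ^ (m div 2) = 1"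
proof -
  have "m = 2 * (m div 2)" using r_dvd_m r_eq_2 by simp
  then have "psc ((\<mu> i * \<mu>s (g (sv i))) ^ (m div 2)) (av n i) = av n i"
    using G_pow_av[OF i, of "m div 2"] G_pow_m[OF av_PA[OF i]] by simp
  then have "(\<mu> i * \<mu>s (g (sv i))) ^ (m div 2) * av n i (i, [Arr i]) = av n i (i, [Arr i])"
    by (metis psc_apply)
  then have "(\<mu> i * \<mu>s (g (sv i))) ^ (m div 2) = 1"
    by (simp add: arrv_apply)
  then show ?thesis using mus_eq_inverse[OF grefl_less[OF n_pos]] i by (simp add: grefl_Suc)
qed

lemma X_ev_formula: "i < n \<Longrightarrow> X (ev i)
      = padd (psc (gam i) (ev i)) (psc (- (gam i * inverse lam)) (ev (g i)))"
  using X_ev_eq gam_image by simp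

lemma X_ev_formula_sym: "i < n \<Longrightarrow> X (ev i) = psc (gam i) (padd (ev i) (ev (g i)))"
  by (rule ext, case_tac x) (simp add: X_ev_eq gam_image_neg padd_apply psc_apply algebra_simps)

lemma gam_suc_v_sq_ratio:
  assumes "i < n" "g i \<noteq> i" "g (sv i) \<noteq> sv i"
  shows "gam (sv i) ^ 2 = \<mu> i * inverse (\<mu> (g (i + 1))) * gam i ^ 2"
  using gam_suc_v_sq[OF assms] mus_eq_inverse[OF grefl_less[OF n_pos]] assms(1)
  by (simp add: grefl_Suc)

lemma X_av_formula:
  "i < n \<Longrightarrow> X (av n i)
      = padd (padd (psc (gam (sv i)) (av n i)) (psc (gam i * \<mu> i) (asv n (g (i + 1)))))
                               (sig (Arr i))"
  by (rule ext, case_tac x)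
     (simp add: qt_sigma_def G_av grefl_Suc lam_eq_minus_1 padd_apply psc_apply algebra_simps)

lemma X_asv_formula:
  "i < n \<Longrightarrow> X (asv n i)
      = padd (padd (psc (gam i) (asv n i)) (psc (gam (sv i) * inverse (\<mu> i)) (av n (g (i + 1)))))
                                (sig (Star i))"
  by (rule ext, case_tac x)
     (simp add: qt_sigma_def G_asv grefl_Suc lam_eq_minus_1 mus_eq_inverse padd_apply psc_apply
         algebra_simps)

lemma fixed_vertex_sig_coeffs:
  assumes j: "j < n" and gj: "g j = j"
  shows "bA (pv j) = inverse (\<mu> j) * dA j" "dS j = - (inverse (\<mu> j) * dA j)"
    "bS (pv j) = - (inverse (\<mu> j * \<mu> (pv j)) * dA j)"
    "dA j ^ 2 = \<mu> j * \<mu> (pv j) * gam (pv j) ^ 2"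
proof -
  have p: "pv j < n" by (rule fixed_vertex_facts(7)[OF j gj])
  note dA = fixed_vertex_dA[OF j gj]
  show bA: "bA (pv j) = inverse (\<mu> j) * dA j" using dA mu_nonzero[OF j] by simp
  show "dS j = - (inverse (\<mu> j) * dA j)" using dS_fixed[OF j gj] lam_eq_minus_1 bA by simp
  show "bS (pv j) = - (inverse (\<mu> j * \<mu> (pv j)) * dA j)"
    using bS_pre_fixed[OF j gj] lam_eq_minus_1 mus_eq_inverse[OF p] mu_nonzero[OF j]
      mu_nonzero[OF p]
    by (simp add: field_simps)
  show "dA j ^ 2 = \<mu> j * \<mu> (pv j) * gam (pv j) ^ 2"
    using bA_pre_fixed_sq[OF j gj] dA mus_eq_inverse[OF j] mu_nonzero[OF j]
    by (simp add: power2_eq_square field_simps)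
qed

lemma sig_around_fixed_vertex:
  assumes j: "j < n" and gj: "g j = j"
  shows "\<exists>c. c ^ 2 = \<mu> j * \<mu> (pv j) * gam (pv j) ^ 2 \<and>
             sig (Arr (pv j)) = psc (inverse (\<mu> j) * c) (av n (pv j)) \<and>
             sig (Arr j) = psc c (asv n (pv j)) \<and>
             sig (Star (pv j)) = psc (- (inverse (\<mu> j * \<mu> (pv j)) * c)) (av n j) \<and>
             sig (Star j) = psc (- (inverse (\<mu> j) * c)) (asv n j)"
proof (intro exI[of _ "dA j"] conjI)
  note f = fixed_vertex_facts[OF j gj] and z = fixed_vertex_coeffs_zero[OF j gj]
    and R = fixed_vertex_sig_coeffs[OF j gj]
  show "dA j ^ 2 = \<mu> j * \<mu> (pv j) * gam (pv j) ^ 2" by (rule R(4))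
  show "sig (Arr (pv j)) = psc (inverse (\<mu> j) * dA j) (av n (pv j))"
    by (rule ext, case_tac x) (simp add: sig_Arr_apply[OF f(7)] z R psc_apply)
  show "sig (Arr j) = psc (dA j) (asv n (pv j))"
    by (rule ext, case_tac x) (simp add: sig_Arr_apply[OF j] z psc_apply)
  show "sig (Star (pv j)) = psc (- (inverse (\<mu> j * \<mu> (pv j)) * dA j)) (av n j)"
    by (rule ext, case_tac x) (simp add: sig_Star_apply[OF f(7)] z R f psc_apply)
  show "sig (Star j) = psc (- (inverse (\<mu> j) * dA j)) (asv n j)"
    by (rule ext, case_tac x) (simp add: sig_Star_apply[OF j] z R psc_apply)
qed

lemma cS_swapped_eq: "k < n \<Longrightarrow> g k = sv k \<Longrightarrow> cS k = - (inverse (\<mu> k) * cA k)"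
  using cS_swapped lam_eq_minus_1 mus_eq_inverse by simp

lemma sig_at_swapped_edge:
  "\<exists>c :: nat \<Rightarrow> 'k.
     (\<forall>k<n. g k = sv k \<and> g (sv k) = k \<longrightarrow>
        sig (Arr k) = psc (c k) (ev k) \<and> sig (Star k) = psc (- (inverse (\<mu> k) * c k)) (ev (sv k))) \<and>
     ((\<forall>i<n. gam i = 0) \<longrightarrow> (\<exists>k<n. g k = sv k \<and> g (sv k) = k \<and> c k \<noteq> 0))"
proof (intro exI[of _ cA] conjI allI impI)
  fix k assume k: "k < n" and "g k = sv k \<and> g (sv k) = k"
  then have gk: "g k = sv k" by simp
  note z = swapped_edge_coeffs_zero[OF k gk]
  show "sig (Arr k) = psc (cA k) (ev k)"
    by (rule ext, case_tac x) (simp add: sig_Arr_apply[OF k] z psc_apply)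
  show "sig (Star k) = psc (- (inverse (\<mu> k) * cA k)) (ev (sv k))"
    by (rule ext, case_tac x) (simp add: sig_Star_apply[OF k] z cS_swapped_eq[OF k gk] psc_apply)
next
  assume G0: "\<forall>i<n. gam i = 0"
  show "\<exists>k<n. g k = sv k \<and> g (sv k) = k \<and> cA k \<noteq> 0"
  proof (rule ccontr)
    assume N: "\<not> (\<exists>k<n. g k = sv k \<and> g (sv k) = k \<and> cA k \<noteq> 0)"
    show False
    proof (rule x_data_not_all_zero[OF G0])
      show "\<forall>k<n. g k = sv k \<longrightarrow> cA k = 0 \<and> cS k = 0"
        using N swapped_edge_facts cS_swapped_eq by fastforce
      show "\<forall>j<n. g j = j \<longrightarrow> bA (pv j) = 0 \<and> dA j = 0 \<and> bS (pv j) = 0 \<and> dS j = 0"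
        using fixed_vertex_sig_coeffs G0 fixed_vertex_facts(7) by simp
    qed
  qed
qed

lemma sig_Arr_zero: "i < n \<Longrightarrow> cA i = 0 \<Longrightarrow> bA i = 0 \<Longrightarrow> dA i = 0 \<Longrightarrow> sig (Arr i) = pzero"
  by (rule ext, case_tac x) (simp add: sig_Arr_apply pzero_apply)

lemma sig_Star_zero: "i < n \<Longrightarrow> cS i = 0 \<Longrightarrow> bS i = 0 \<Longrightarrow> dS i = 0 \<Longrightarrow> sig (Star i) = pzero"
  by (rule ext, case_tac x) (simp add: sig_Star_apply pzero_apply)

lemma sig_elsewhere:
  assumes i: "i < n" and h: "\<not> (\<exists>j<n. g j = j \<and> (i = pv j \<or> i = j))" "g i \<noteq> sv i"
  shows "sig (Arr i) = pzero \<and> sig (Star i) = pzero"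
proof -
  have "g (sv i) \<noteq> sv i"
    using h(1) i suc_v_less[OF n_pos] pre_v_suc_v[OF i] by metis
  moreover have "g (sv i) \<noteq> i" "g i \<noteq> i" using h grefl_suc_v_eq_iff[OF i] i by auto
  ultimately show ?thesis
    using h(2) sig_Arr_zero[OF i] sig_Star_zero[OF i]
      cA_support[OF i] bA_support[OF i] dA_support[OF i]
      cS_support[OF i] bS_support[OF i] dS_support[OF i]
    by blast
qed

end

theorem theorem3p15:
  fixes lam :: "'k::field" and r m n d :: nat
    and G X :: "'k pa \<Rightarrow> 'k pa"
    and \<mu> \<mu>s :: "nat \<Rightarrow> 'k"
  assumes r_gt1: "r > 1" and m_pos: "m > 0" and r_dvd_m: "r dvd m"
    and lam_prim: "lam ^ r = 1" "\<forall>j. 0 < j \<and> j < r \<longrightarrow> lam ^ j \<noteq> 1"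
    and r_char: "of_nat r \<noteq> (0::'k)"
    and n_ge3: "n \<ge> 3"
    and action: "taft_module_algebra n lam r m G X"
    and lin: "linear_action n G X"
    and inner: "inner_faithful n lam r m G X"
    and d_range: "0 < d" "d \<le> n - 1"
    and mu_nz: "\<forall>i<n. \<mu> i \<noteq> 0 \<and> \<mu>s i \<noteq> 0"
    and g_e: "\<forall>i<n. G (ev i) = ev (grefl n d i)"
    and g_a: "\<forall>i<n. G (av n i) = psc (\<mu> i) (asv n (grefl n d (i + 1)))"
    and g_as: "\<forall>i<n. G (asv n i) = psc (\<mu>s i) (av n (grefl n d (i + 1)))"
    and desc: "descends n G X"
  shows "r = 2 \<and> lam = -1 \<and>
    (\<forall>i<n. \<mu>s i = inverse (\<mu> i)) \<and>
    (\<forall>i<n. (\<mu> i * inverse (\<mu> (grefl n d (i + 1)))) ^ (m div 2) = 1) \<and>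
    (\<exists>\<gamma> :: nat \<Rightarrow> 'k.
       (\<forall>i<n. X (ev i) = padd (psc (\<gamma> i) (ev i)) (psc (- (\<gamma> i * inverse lam)) (ev (grefl n d i)))) \<and>
       (\<forall>i<n. X (ev i) = psc (\<gamma> i) (padd (ev i) (ev (grefl n d i)))) \<and>
       (\<forall>i<n. \<gamma> i = - \<gamma> (grefl n d i)) \<and>
       (\<forall>j<n. grefl n d j = j \<longrightarrow> \<gamma> j = 0) \<and>
       (\<forall>i<n. grefl n d i \<noteq> i \<and> grefl n d (suc_v n i) \<noteq> suc_v n i \<longrightarrow>
              \<gamma> (suc_v n i) ^ 2 = \<mu> i * inverse (\<mu> (grefl n d (i + 1))) * \<gamma> i ^ 2) \<and>
       (\<forall>i<n. X (av n i) = padd (padd (psc (\<gamma> (suc_v n i)) (av n i))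
                                       (psc (\<gamma> i * \<mu> i) (asv n (grefl n d (i + 1)))))
                                 (qt_sigma n lam G X \<gamma> (Arr i))) \<and>
       (\<forall>i<n. X (asv n i) = padd (padd (psc (\<gamma> i) (asv n i))
                                       (psc (\<gamma> (suc_v n i) * inverse (\<mu> i)) (av n (grefl n d (i + 1)))))
                                 (qt_sigma n lam G X \<gamma> (Star i))) \<and>
       (\<forall>j<n. grefl n d j = j \<longrightarrow>
          (\<exists>c. c ^ 2 = \<mu> j * \<mu> (pre_v n j) * \<gamma> (pre_v n j) ^ 2 \<and>
               qt_sigma n lam G X \<gamma> (Arr (pre_v n j)) = psc (inverse (\<mu> j) * c) (av n (pre_v n j)) \<and>
               qt_sigma n lam G X \<gamma> (Arr j) = psc c (asv n (pre_v n j)) \<and>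
               qt_sigma n lam G X \<gamma> (Star (pre_v n j)) = psc (- (inverse (\<mu> j * \<mu> (pre_v n j)) * c)) (av n j) \<and>
               qt_sigma n lam G X \<gamma> (Star j) = psc (- (inverse (\<mu> j) * c)) (asv n j))) \<and>
       (\<exists>c :: nat \<Rightarrow> 'k.
          (\<forall>k<n. grefl n d k = suc_v n k \<and> grefl n d (suc_v n k) = k \<longrightarrow>
              qt_sigma n lam G X \<gamma> (Arr k) = psc (c k) (ev k) \<and>
              qt_sigma n lam G X \<gamma> (Star k) = psc (- (inverse (\<mu> k) * c k)) (ev (suc_v n k))) \<and>
          ((\<forall>i<n. \<gamma> i = 0) \<longrightarrow>
              (\<exists>k<n. grefl n d k = suc_v n k \<and> grefl n d (suc_v n k) = k \<and> c k \<noteq> 0))) \<and>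
       (\<forall>i<n. \<not> (\<exists>j<n. grefl n d j = j \<and> (i = pre_v n j \<or> i = j)) \<and> grefl n d i \<noteq> suc_v n i \<longrightarrow>
              qt_sigma n lam G X \<gamma> (Arr i) = pzero \<and> qt_sigma n lam G X \<gamma> (Star i) = pzero))"
proof -
  interpret reflection_action n lam r m G X d \<mu> \<mu>s
    by unfold_locales (fact assms)+
  show ?thesis
    apply (intro conjI)
        apply (fact r_eq_2)
       apply (fact lam_eq_minus_1)
      using mus_eq_inverse apply blast
     using mu_ratio_pow apply blast
    apply (rule exI[of _ gam])
    using X_ev_formula X_ev_formula_sym gam_image_neg gam_fixed gam_suc_v_sq_ratio
      X_av_formula X_asv_formula sig_around_fixed_vertex sig_at_swapped_edge sig_elsewhere
    by (intro conjI) auto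
qed
end
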